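(* A finite-dimensional algebra $\Lambda$ is ext-irreducible if and only if $\Lambda$ is mono-irreducible.
   Context: $\Bbbk$ is algebraically closed. Let $\Lambda=\Bbbk Q/I$ be the path algebra of a bound quiver (for an arbitrary finite-dimensional algebra the notions are taken for a Morita-equivalent bound quiver algebra). For a dimension vector $\mathbf d\in\mathbb N^{Q_0}$, $\mathrm{rep}_\Lambda(\mathbf d)$ is the affine variety of representations $V=(V_\alpha)_{\alpha\in Q_1}$, $V_\alpha\in M_{d_{t\alpha}\times d_{s\alpha}}(\Bbbk)$, satisfying the relations in $I$. Mono-irreducibility: for dimension vectors $\mathbf e\le\mathbf d$ (componentwise), $\mathcal M_\Lambda(\mathbf e,\mathbf d)$ is the variety of triples $(V,W,f)$ with $V\in\mathrm{rep}_\Lambda(\mathbf e)$, $W\in\mathrm{rep}_\Lambda(\mathbf d)$, $f=(f_x)$, $f_x\in M_{d_x\times e_x}(\Bbbk)$, an injective homomorphism $V\to W$ (i.e. $W_\alpha f_{s\alpha}=f_{t\alpha}V_\alpha$ for all $\alpha$ and each $f_x$ injective); $\Lambda$ is mono-irreducible if all $\mathcal M_\Lambda(\mathbf e,\mathbf d)$, $\mathbf e\le\mathbf d$, are irreducible. Ext-irreducibility: for $V\in\mathrm{rep}_\Lambda(\mathbf d)$, $U\in\mathrm{rep}_\Lambda(\mathbf e)$ and $Z=(Z_\alpha)_{\alpha\in Q_1}$ with $Z_\alpha\in M_{d_{t\alpha}\times e_{s\alpha}}(\Bbbk)$, let $W^{V,Z,U}$ be the representation of $Q$ with $W^{V,Z,U}_\alpha=\begin{pmatrix}V_\alpha&Z_\alpha\\0&U_\alpha\end{pmatrix}$;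 let $\mathbb Z^{U,V}$ be the set of $Z$ such that $W^{V,Z,U}$ satisfies the relations of $I$. $\mathcal E_\Lambda(\mathbf e,\mathbf d)$ is the affine variety of triples $(U,V,Z)$ with $U\in\mathrm{rep}_\Lambda(\mathbf e)$, $V\in\mathrm{rep}_\Lambda(\mathbf d)$, $Z\in\mathbb Z^{U,V}$; $\Lambda$ is ext-irreducible if $\mathcal E_\Lambda(\mathbf e,\mathbf d)$ is irreducible for all dimension vectors $\mathbf d,\mathbf e$. *)

theory Defs
  imports "HOL-Computational_Algebra.Polynomial"
begin

definition alg_closed :: "'k::field itself \<Rightarrow> bool" where
  "alg_closed _ \<longleftrightarrow> (\<forall>p::'k poly. degree p > 0 \<longrightarrow> (\<exists>z. poly p z = 0))"

inductive_set polyfun :: "(('c \<Rightarrow> 'k::field) \<Rightarrow> 'k) set" where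
  pf_const: "(\<lambda>_. c) \<in> polyfun"
| pf_proj: "(\<lambda>x. x i) \<in> polyfun"
| pf_add: "p \<in> polyfun \<Longrightarrow> q \<in> polyfun \<Longrightarrow> (\<lambda>x. p x + q x) \<in> polyfun"
| pf_mult: "p \<in> polyfun \<Longrightarrow> q \<in> polyfun \<Longrightarrow> (\<lambda>x. p x * q x) \<in> polyfun"

definition zariski_closed :: "(('c \<Rightarrow> 'k::field) set) \<Rightarrow> bool" where
  "zariski_closed A \<longleftrightarrow> (\<exists>P \<subseteq> polyfun. A = {x. \<forall>p\<in>P. p x = 0})"

definition zariski_irreducible :: "(('c \<Rightarrow> 'k::field) set) \<Rightarrow> bool" where
  "zariski_irreducible S \<longleftrightarrow> S \<noteq> {} \<and>
     (\<forall>A B. zariski_closed A \<longrightarrow> zariski_closed B \<longrightarrow> S \<subseteq> A \<union> B \<longrightarrow> S \<subseteq> A \<or> S \<subseteq> B)"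

text \<open>A matrix is a function nat => nat => k; an m x n matrix has zero entries
outside rows < m and columns < n.\<close>
type_synonym 'k mat = "nat \<Rightarrow> nat \<Rightarrow> 'k"

definition in_mat :: "nat \<Rightarrow> nat \<Rightarrow> 'k::zero mat \<Rightarrow> bool" where
  "in_mat m n A \<longleftrightarrow> (\<forall>i j. (i \<ge> m \<or> j \<ge> n) \<longrightarrow> A i j = 0)"

definition idm :: "nat \<Rightarrow> 'k::{zero,one} mat" where
  "idm n = (\<lambda>i j. if i = j \<and> i < n then 1 else 0)"

definition mmult :: "'k::comm_semiring_0 mat \<Rightarrow> nat \<Rightarrow> 'k mat \<Rightarrow> 'k mat" where
  "mmult A n B = (\<lambda>i j. \<Sum>k<n. A i k * B k j)"

definition injective_mat :: "nat \<Rightarrow> nat \<Rightarrow> 'k::field mat \<Rightarrow> bool" where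
  "injective_mat m n A \<longleftrightarrow>
     (\<forall>v::nat \<Rightarrow> 'k. (\<forall>j\<ge>n. v j = 0) \<longrightarrow> (\<forall>i<m. (\<Sum>j<n. A i j * v j) = 0) \<longrightarrow> (\<forall>j. v j = 0))"

text \<open>A finite quiver: vertices 'v, arrows 'a (finite types), source s and target t.
A path is a pair (x, [a1,...,an]) with start vertex x, traversing a1 first.\<close>

fun valid_path :: "('a \<Rightarrow> 'v) \<Rightarrow> ('a \<Rightarrow> 'v) \<Rightarrow> 'v \<Rightarrow> 'a list \<Rightarrow> bool" where
  "valid_path s t x [] = True"
| "valid_path s t x (a # as) = (s a = x \<and> valid_path s t (t a) as)"

fun path_end :: "('a \<Rightarrow> 'v) \<Rightarrow> 'v \<Rightarrow> 'a list \<Rightarrow> 'v" where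
  "path_end t x [] = x"
| "path_end t x (a # as) = path_end t (t a) as"

definition pathalg :: "('a \<Rightarrow> 'v) \<Rightarrow> ('a \<Rightarrow> 'v) \<Rightarrow> (('v \<times> 'a list) \<Rightarrow> 'k::field) set" where
  "pathalg s t = {\<rho>. finite {p. \<rho> p \<noteq> 0} \<and> (\<forall>p. \<rho> p \<noteq> 0 \<longrightarrow> valid_path s t (fst p) (snd p))}"

text \<open>Multiplication in kQ: rho * sigma means "first sigma, then rho".\<close>
definition pmult :: "('a \<Rightarrow> 'v) \<Rightarrow> (('v \<times> 'a list) \<Rightarrow> 'k::field) \<Rightarrow> (('v \<times> 'a list) \<Rightarrow> 'k) \<Rightarrow> (('v \<times> 'a list) \<Rightarrow> 'k)" where
  "pmult t \<rho> \<sigma> = (\<lambda>(x, l). \<Sum>i\<in>{0..length l}.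
      \<rho> (path_end t x (take i l), drop i l) * \<sigma> (x, take i l))"

definition two_sided_ideal :: "('a \<Rightarrow> 'v) \<Rightarrow> ('a \<Rightarrow> 'v) \<Rightarrow> (('v \<times> 'a list) \<Rightarrow> 'k::field) set \<Rightarrow> bool" where
  "two_sided_ideal s t I \<longleftrightarrow> I \<subseteq> pathalg s t \<and> (\<lambda>_. 0) \<in> I \<and>
     (\<forall>\<rho>\<in>I. \<forall>\<sigma>\<in>I. (\<lambda>p. \<rho> p + \<sigma> p) \<in> I) \<and>
     (\<forall>\<rho>\<in>I. \<forall>c. (\<lambda>p. c * \<rho> p) \<in> I) \<and>
     (\<forall>\<rho>\<in>I. \<forall>\<sigma>\<in>pathalg s t. pmult t \<rho> \<sigma> \<in> I \<and> pmult t \<sigma> \<rho> \<in> I)"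

text \<open>Admissible ideal: R^m \<subseteq> I \<subseteq> R^2 for some m \<ge> 2, where R^k consists of the
elements of kQ supported on paths of length \<ge> k.\<close>
definition admissible_ideal :: "('a \<Rightarrow> 'v) \<Rightarrow> ('a \<Rightarrow> 'v) \<Rightarrow> (('v \<times> 'a list) \<Rightarrow> 'k::field) set \<Rightarrow> bool" where
  "admissible_ideal s t I \<longleftrightarrow> two_sided_ideal s t I \<and>
     (\<forall>\<rho>\<in>I. \<forall>p. \<rho> p \<noteq> 0 \<longrightarrow> length (snd p) \<ge> 2) \<and>
     (\<exists>m\<ge>2. \<forall>\<rho>\<in>pathalg s t. (\<forall>p. \<rho> p \<noteq> 0 \<longrightarrow> length (snd p) \<ge> m) \<longrightarrow> \<rho> \<in> I)"

text \<open>V_p for a path p = (x, [a1..an]) is V_an ... V_a1 (a d(end) x d(x) matrix).\<close>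
fun path_eval :: "('a \<Rightarrow> 'v) \<Rightarrow> ('v \<Rightarrow> nat) \<Rightarrow> ('a \<Rightarrow> 'k::field mat) \<Rightarrow> 'v \<Rightarrow> 'a list \<Rightarrow> 'k mat" where
  "path_eval t d V x [] = idm (d x)"
| "path_eval t d V x (a # as) = mmult (path_eval t d V (t a) as) (d (t a)) (V a)"

definition satisfies :: "('a \<Rightarrow> 'v) \<Rightarrow> ('v \<Rightarrow> nat) \<Rightarrow> ('a \<Rightarrow> 'k::field mat) \<Rightarrow> (('v \<times> 'a list) \<Rightarrow> 'k) \<Rightarrow> bool" where
  "satisfies t d V \<rho> \<longleftrightarrow> (\<forall>x y i j.
     (\<Sum>p\<in>{p. \<rho> p \<noteq> 0 \<and> fst p = x \<and> path_end t x (snd p) = y}.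
        \<rho> p * path_eval t d V x (snd p) i j) = 0)"

definition is_mat_family :: "('a \<Rightarrow> 'v) \<Rightarrow> ('a \<Rightarrow> 'v) \<Rightarrow> ('v \<Rightarrow> nat) \<Rightarrow> ('v \<Rightarrow> nat) \<Rightarrow> ('a \<Rightarrow> 'k::field mat) \<Rightarrow> bool" where
  "is_mat_family s t drow ecol Z \<longleftrightarrow> (\<forall>a. in_mat (drow (t a)) (ecol (s a)) (Z a))"

definition rep :: "('a \<Rightarrow> 'v) \<Rightarrow> ('a \<Rightarrow> 'v) \<Rightarrow> (('v \<times> 'a list) \<Rightarrow> 'k::field) set \<Rightarrow> ('v \<Rightarrow> nat) \<Rightarrow> ('a \<Rightarrow> 'k mat) set" where
  "rep s t I d = {V. is_mat_family s t d d V \<and> (\<forall>\<rho>\<in>I. satisfies t d V \<rho>)}"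

definition is_hom :: "('a \<Rightarrow> 'v) \<Rightarrow> ('a \<Rightarrow> 'v) \<Rightarrow> ('v \<Rightarrow> nat) \<Rightarrow> ('v \<Rightarrow> nat) \<Rightarrow> ('a \<Rightarrow> 'k::field mat) \<Rightarrow> ('a \<Rightarrow> 'k mat) \<Rightarrow> ('v \<Rightarrow> 'k mat) \<Rightarrow> bool" where
  "is_hom s t e d V W f \<longleftrightarrow> (\<forall>a. mmult (W a) (d (s a)) (f (s a)) = mmult (f (t a)) (e (t a)) (V a))"

definition monovar :: "('a \<Rightarrow> 'v) \<Rightarrow> ('a \<Rightarrow> 'v) \<Rightarrow> (('v \<times> 'a list) \<Rightarrow> 'k::field) set \<Rightarrow> ('v \<Rightarrow> nat) \<Rightarrow> ('v \<Rightarrow> nat)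
     \<Rightarrow> (('a \<Rightarrow> 'k mat) \<times> ('a \<Rightarrow> 'k mat) \<times> ('v \<Rightarrow> 'k mat)) set" where
  "monovar s t I e d = {(V, W, f). V \<in> rep s t I e \<and> W \<in> rep s t I d \<and>
      (\<forall>x. in_mat (d x) (e x) (f x) \<and> injective_mat (d x) (e x) (f x)) \<and> is_hom s t e d V W f}"

definition coords3 :: "('a \<Rightarrow> 'k mat) \<times> ('b \<Rightarrow> 'k mat) \<times> ('c \<Rightarrow> 'k mat)
     \<Rightarrow> (('a \<times> nat \<times> nat) + ('b \<times> nat \<times> nat) + ('c \<times> nat \<times> nat)) \<Rightarrow> 'k" where
  "coords3 = (\<lambda>(A, B, C) c. case c of
       Inl (a, i, j) \<Rightarrow> A a i j
     | Inr (Inl (b, i, j)) \<Rightarrow> B b i j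
     | Inr (Inr (x, i, j)) \<Rightarrow> C x i j)"

definition mono_irreducible :: "('a \<Rightarrow> 'v) \<Rightarrow> ('a \<Rightarrow> 'v) \<Rightarrow> (('v \<times> 'a list) \<Rightarrow> 'k::field) set \<Rightarrow> bool" where
  "mono_irreducible s t I \<longleftrightarrow>
     (\<forall>e d. (\<forall>x. e x \<le> d x) \<longrightarrow> zariski_irreducible (coords3 ` monovar s t I e d))"

text \<open>W^{V,Z,U}_a = [[V_a, Z_a], [0, U_a]], of dimension vector d + e.\<close>
definition blockrep :: "('a \<Rightarrow> 'v) \<Rightarrow> ('a \<Rightarrow> 'v) \<Rightarrow> ('v \<Rightarrow> nat) \<Rightarrow> ('a \<Rightarrow> 'k::field mat) \<Rightarrow> ('a \<Rightarrow> 'k mat) \<Rightarrow> ('a \<Rightarrow> 'k mat) \<Rightarrow> ('a \<Rightarrow> 'k mat)" where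
  "blockrep s t d V Z U = (\<lambda>a i j.
     if i < d (t a) then (if j < d (s a) then V a i j else Z a i (j - d (s a)))
     else (if j < d (s a) then 0 else U a (i - d (t a)) (j - d (s a))))"

definition Zset :: "('a \<Rightarrow> 'v) \<Rightarrow> ('a \<Rightarrow> 'v) \<Rightarrow> (('v \<times> 'a list) \<Rightarrow> 'k::field) set \<Rightarrow> ('v \<Rightarrow> nat) \<Rightarrow> ('v \<Rightarrow> nat)
     \<Rightarrow> ('a \<Rightarrow> 'k mat) \<Rightarrow> ('a \<Rightarrow> 'k mat) \<Rightarrow> ('a \<Rightarrow> 'k mat) set" where
  "Zset s t I e d U V = {Z. is_mat_family s t d e Z \<and>
      (\<forall>\<rho>\<in>I. satisfies t (\<lambda>x. d x + e x) (blockrep s t d V Z U) \<rho>)}"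

definition extvar :: "('a \<Rightarrow> 'v) \<Rightarrow> ('a \<Rightarrow> 'v) \<Rightarrow> (('v \<times> 'a list) \<Rightarrow> 'k::field) set \<Rightarrow> ('v \<Rightarrow> nat) \<Rightarrow> ('v \<Rightarrow> nat)
     \<Rightarrow> (('a \<Rightarrow> 'k mat) \<times> ('a \<Rightarrow> 'k mat) \<times> ('a \<Rightarrow> 'k mat)) set" where
  "extvar s t I e d = {(U, V, Z). U \<in> rep s t I e \<and> V \<in> rep s t I d \<and> Z \<in> Zset s t I e d U V}"

definition ext_irreducible :: "('a \<Rightarrow> 'v) \<Rightarrow> ('a \<Rightarrow> 'v) \<Rightarrow> (('v \<times> 'a list) \<Rightarrow> 'k::field) set \<Rightarrow> bool" where
  "ext_irreducible s t I \<longleftrightarrow> (\<forall>e d. zariski_irreducible (coords3 ` extvar s t I e d))"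

end

theory Submission
  imports Defs "Jordan_Normal_Form.Determinant"
begin

(*
  A monomorphism f : V \<rightarrow> W into a representation of dimension vector d + e can be completed,
  vertex by vertex, to an invertible matrix G whose first d columns are f. Conjugating W by G
  turns f into the inclusion of the first d coordinates, and W into a block upper triangular
  representation [[V, Z], [0, U]], i.e. a point (U, V, Z) of the extension variety E(e, d).

  Hence E(e, d) is the image of a regular map defined on the open subset of M(d, d + e) where
  f completed by unit columns is invertible; so E inherits irreducibility from M. Conversely,
  M(d, d + e) is the image of E(e, d) times the invertible base changes. Instead of proving the
  general linear group irreducible, any two points of M, obtained from base changes G1 and G2,
  are joined inside the image of E times the open part of the line through G1 and G2 where the
  base change stays invertible; over an infinite field this line is irreducible.
*)

section \<open>Polynomial functions and the Zariski topology\<close>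

lemma polyfun_sum:
  assumes "finite A" "\<And>a. a \<in> A \<Longrightarrow> (\<lambda>x. f a x) \<in> polyfun"
  shows "(\<lambda>x. \<Sum>a\<in>A. f a x) \<in> polyfun"
  using assms
  by (induction A rule: finite_induct) (simp_all add: pf_add pf_const[of 0, simplified])

lemma polyfun_prod:
  assumes "finite A" "\<And>a. a \<in> A \<Longrightarrow> (\<lambda>x. f a x) \<in> polyfun"
  shows "(\<lambda>x. \<Prod>a\<in>A. f a x) \<in> polyfun"
  using assms
  by (induction A rule: finite_induct) (simp_all add: pf_mult pf_const[of 1, simplified])

lemma polyfun_minus: "p \<in> polyfun \<Longrightarrow> q \<in> polyfun \<Longrightarrow> (\<lambda>x. p x - q x) \<in> polyfun"
  using pf_add[OF _ pf_mult[OF pf_const[of "- 1"]], of p q] by simp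

lemma polyfun_if: "p \<in> polyfun \<Longrightarrow> q \<in> polyfun \<Longrightarrow> (\<lambda>x. if b then p x else q x) \<in> polyfun"
  by (cases b) auto

lemma polyfun_compose:
  assumes "p \<in> polyfun" "\<And>c. (\<lambda>x. F x c) \<in> polyfun"
  shows "(\<lambda>x. p (F x)) \<in> polyfun"
  using assms(1)
proof induction
  case (pf_add p q) then show ?case by (simp add: polyfun.pf_add)
next
  case (pf_mult p q) then show ?case by (simp add: polyfun.pf_mult)
qed (simp_all add: polyfun.pf_const assms(2))

lemma zariski_closedE:
  assumes "zariski_closed A"
  obtains P where "P \<subseteq> polyfun" "A = {x. \<forall>p\<in>P. p x = 0}"
  using assms unfolding zariski_closed_def by auto

lemma zariski_closed_zero_set: "P \<subseteq> polyfun \<Longrightarrow> zariski_closed {x. \<forall>p\<in>P. p x = 0}"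
  unfolding zariski_closed_def by blast

lemma zariski_irreducibleD:
  "zariski_irreducible S \<Longrightarrow> zariski_closed A \<Longrightarrow> zariski_closed B \<Longrightarrow> S \<subseteq> A \<union> B \<Longrightarrow>
    S \<subseteq> A \<or> S \<subseteq> B"
  unfolding zariski_irreducible_def by blast

lemma zariski_irreducible_nonempty: "zariski_irreducible S \<Longrightarrow> S \<noteq> {}"
  unfolding zariski_irreducible_def by blast

lemma zariski_irreducibleI_pairs:
  assumes "S \<noteq> {}"
    and "\<And>a b. a \<in> S \<Longrightarrow> b \<in> S \<Longrightarrow> \<exists>T\<subseteq>S. zariski_irreducible T \<and> a \<in> T \<and> b \<in> T"
  shows "zariski_irreducible S"
  unfolding zariski_irreducible_def
proof (intro conjI allI impI)
  fix A B
  assume closed: "zariski_closed A" "zariski_closed B" and cover: "S \<subseteq> A \<union> B"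
  show "S \<subseteq> A \<or> S \<subseteq> B"
  proof (rule ccontr)
    assume "\<not> (S \<subseteq> A \<or> S \<subseteq> B)"
    then obtain a b where ab: "a \<in> S" "a \<notin> A" "b \<in> S" "b \<notin> B" by blast
    then obtain T where T: "T \<subseteq> S" "zariski_irreducible T" "a \<in> T" "b \<in> T"
      using assms(2) by blast
    then have "T \<subseteq> A \<or> T \<subseteq> B" using closed cover by (intro zariski_irreducibleD) auto
    then show False using ab T by blast
  qed
qed fact

definition regular_on :: "('c \<Rightarrow> 'k::field) set \<Rightarrow> (('c \<Rightarrow> 'k) \<Rightarrow> 'k) \<Rightarrow> bool" where
  "regular_on S \<phi> \<longleftrightarrow>
     (\<exists>q h. q \<in> polyfun \<and> h \<in> polyfun \<and> (\<forall>x\<in>S. h x \<noteq> 0 \<and> \<phi> x * h x = q x))"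

definition regular_map_on :: "('c \<Rightarrow> 'k::field) set \<Rightarrow> (('c \<Rightarrow> 'k) \<Rightarrow> ('d \<Rightarrow> 'k)) \<Rightarrow> bool" where
  "regular_map_on S F \<longleftrightarrow> (\<forall>c. regular_on S (\<lambda>x. F x c))"

lemma regular_on_divide:
  assumes "q \<in> polyfun" "h \<in> polyfun" "\<And>x. x \<in> S \<Longrightarrow> h x \<noteq> 0"
  shows "regular_on S (\<lambda>x. q x / h x)"
  unfolding regular_on_def using assms by (intro exI[of _ q] exI[of _ h]) auto

lemma regular_on_polyfun: "p \<in> polyfun \<Longrightarrow> regular_on S p"
  using regular_on_divide[of p "\<lambda>_. 1"] by (simp add: pf_const)

lemma regular_on_const: "regular_on S (\<lambda>_. c)"
  by (rule regular_on_polyfun) (rule pf_const)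

lemma regular_on_add:
  assumes "regular_on S f" "regular_on S g"
  shows "regular_on S (\<lambda>x. f x + g x)"
proof -
  obtain q1 h1 where 1: "q1 \<in> polyfun" "h1 \<in> polyfun" "\<And>x. x \<in> S \<Longrightarrow> h1 x \<noteq> 0"
    "\<And>x. x \<in> S \<Longrightarrow> f x * h1 x = q1 x" using assms(1) unfolding regular_on_def by blast
  obtain q2 h2 where 2: "q2 \<in> polyfun" "h2 \<in> polyfun" "\<And>x. x \<in> S \<Longrightarrow> h2 x \<noteq> 0"
    "\<And>x. x \<in> S \<Longrightarrow> g x * h2 x = q2 x" using assms(2) unfolding regular_on_def by blast
  have "(f x + g x) * (h1 x * h2 x) = q1 x * h2 x + q2 x * h1 x" if "x \<in> S" for x
  proof -
    have "(f x + g x) * (h1 x * h2 x) = (f x * h1 x) * h2 x + (g x * h2 x) * h1 x"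
      by (simp add: algebra_simps)
    then show ?thesis using 1(4)[OF that] 2(4)[OF that] by simp
  qed
  then show ?thesis unfolding regular_on_def using 1 2
    by (intro exI[of _ "\<lambda>x. q1 x * h2 x + q2 x * h1 x"] exI[of _ "\<lambda>x. h1 x * h2 x"])
      (auto intro: pf_add pf_mult)
qed

lemma regular_on_mult:
  assumes "regular_on S f" "regular_on S g"
  shows "regular_on S (\<lambda>x. f x * g x)"
proof -
  obtain q1 h1 where 1: "q1 \<in> polyfun" "h1 \<in> polyfun" "\<And>x. x \<in> S \<Longrightarrow> h1 x \<noteq> 0"
    "\<And>x. x \<in> S \<Longrightarrow> f x * h1 x = q1 x" using assms(1) unfolding regular_on_def by blast
  obtain q2 h2 where 2: "q2 \<in> polyfun" "h2 \<in> polyfun" "\<And>x. x \<in> S \<Longrightarrow> h2 x \<noteq> 0"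
    "\<And>x. x \<in> S \<Longrightarrow> g x * h2 x = q2 x" using assms(2) unfolding regular_on_def by blast
  have "(f x * g x) * (h1 x * h2 x) = q1 x * q2 x" if "x \<in> S" for x
  proof -
    have "(f x * g x) * (h1 x * h2 x) = (f x * h1 x) * (g x * h2 x)" by (simp add: ac_simps)
    then show ?thesis using 1(4)[OF that] 2(4)[OF that] by simp
  qed
  then show ?thesis unfolding regular_on_def using 1 2
    by (intro exI[of _ "\<lambda>x. q1 x * q2 x"] exI[of _ "\<lambda>x. h1 x * h2 x"]) (auto intro: pf_mult)
qed

lemma regular_on_sum:
  assumes "finite A" "\<And>a. a \<in> A \<Longrightarrow> regular_on S (\<lambda>x. f a x)"
  shows "regular_on S (\<lambda>x. \<Sum>a\<in>A. f a x)"
  using assms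
  by (induction A rule: finite_induct)
    (simp_all add: regular_on_add regular_on_const[of S 0, simplified])

lemma regular_on_if:
  "regular_on S f \<Longrightarrow> regular_on S g \<Longrightarrow> regular_on S (\<lambda>x. if b then f x else g x)"
  by (cases b) auto

lemma regular_on_compose_polyfun:
  assumes "regular_map_on S F" "p \<in> polyfun"
  shows "regular_on S (\<lambda>x. p (F x))"
  using assms(2)
proof induction
  case (pf_add p q) then show ?case by (simp add: regular_on_add)
next
  case (pf_mult p q) then show ?case by (simp add: regular_on_mult)
qed (use assms(1) in \<open>simp_all add: regular_on_const regular_map_on_def\<close>)

lemma regular_map_on_polyfun: "(\<And>c. (\<lambda>x. F x c) \<in> polyfun) \<Longrightarrow> regular_map_on S F"
  unfolding regular_map_on_def by (simp add: regular_on_polyfun)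

lemma regular_on_zero_set:
  assumes "regular_on S \<phi>"
  shows "\<exists>q\<in>polyfun. \<forall>x\<in>S. \<phi> x = 0 \<longleftrightarrow> q x = 0"
proof -
  obtain q h where qh: "q \<in> polyfun" "\<forall>x\<in>S. h x \<noteq> 0 \<and> \<phi> x * h x = q x"
    using assms unfolding regular_on_def by blast
  then have "\<forall>x\<in>S. \<phi> x = 0 \<longleftrightarrow> q x = 0" by (metis mult_eq_0_iff)
  then show ?thesis using qh(1) by blast
qed

lemma zariski_closed_preimage:
  assumes F: "regular_map_on S F" and A: "zariski_closed A"
  obtains C where "zariski_closed C" "\<And>x. x \<in> S \<Longrightarrow> x \<in> C \<longleftrightarrow> F x \<in> A"
proof -
  obtain P where P: "P \<subseteq> polyfun" "A = {x. \<forall>p\<in>P. p x = 0}" using A by (rule zariski_closedE)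
  have "\<forall>p\<in>P. \<exists>q. q \<in> polyfun \<and> (\<forall>x\<in>S. p (F x) = 0 \<longleftrightarrow> q x = 0)"
  proof
    fix p assume "p \<in> P"
    then have "regular_on S (\<lambda>x. p (F x))"
      using P(1) by (intro regular_on_compose_polyfun[OF F, of p]) blast
    then show "\<exists>q. q \<in> polyfun \<and> (\<forall>x\<in>S. p (F x) = 0 \<longleftrightarrow> q x = 0)"
      using regular_on_zero_set by blast
  qed
  then obtain Q where Q: "\<forall>p\<in>P. Q p \<in> polyfun \<and> (\<forall>x\<in>S. p (F x) = 0 \<longleftrightarrow> Q p x = 0)"
    by (rule bchoice[elim_format]) blast
  show thesis
  proof (rule that)
    show "zariski_closed {x. \<forall>q\<in>Q ` P. q x = 0}" using Q by (intro zariski_closed_zero_set) blast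
    show "x \<in> {x. \<forall>q\<in>Q ` P. q x = 0} \<longleftrightarrow> F x \<in> A" if "x \<in> S" for x
      using Q that unfolding P(2) by auto
  qed
qed

lemma zariski_irreducible_image:
  assumes irr: "zariski_irreducible S" and F: "regular_map_on S F"
  shows "zariski_irreducible (F ` S)"
  unfolding zariski_irreducible_def
proof (intro conjI allI impI)
  show "F ` S \<noteq> {}" using zariski_irreducible_nonempty[OF irr] by auto
  fix A B
  assume A: "zariski_closed A" and B: "zariski_closed B" and cover: "F ` S \<subseteq> A \<union> B"
  obtain A' where A': "zariski_closed A'" "\<And>x. x \<in> S \<Longrightarrow> x \<in> A' \<longleftrightarrow> F x \<in> A"
    using zariski_closed_preimage[OF F A] by blast
  obtain B' where B': "zariski_closed B'" "\<And>x. x \<in> S \<Longrightarrow> x \<in> B' \<longleftrightarrow> F x \<in> B"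
    using zariski_closed_preimage[OF F B] by blast
  have "S \<subseteq> A' \<or> S \<subseteq> B'" using cover A' B' by (intro zariski_irreducibleD[OF irr]) auto
  then show "F ` S \<subseteq> A \<or> F ` S \<subseteq> B" using A' B' by blast
qed

lemma zariski_irreducible_nonzero_locus:
  assumes irr: "zariski_irreducible S" and D: "D \<in> polyfun" and ex: "\<exists>x\<in>S. D x \<noteq> 0"
  shows "zariski_irreducible {x\<in>S. D x \<noteq> 0}"
  unfolding zariski_irreducible_def
proof (intro conjI allI impI)
  show "{x\<in>S. D x \<noteq> 0} \<noteq> {}" using ex by blast
  fix A B
  assume A: "zariski_closed A" and B: "zariski_closed B" and cover: "{x\<in>S. D x \<noteq> 0} \<subseteq> A \<union> B"
  \<comment> \<open>multiplying the equations of A and B by D gives closed sets covering all of S\<close>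
  have times_D: "zariski_closed {x. D x = 0 \<or> x \<in> C}" if C: "zariski_closed C" for C
  proof -
    obtain P where P: "P \<subseteq> polyfun" "C = {x. \<forall>p\<in>P. p x = 0}" using C by (rule zariski_closedE)
    have "{x. D x = 0 \<or> x \<in> C} = {x. \<forall>q\<in>(\<lambda>p x. p x * D x) ` P. q x = 0}"
      unfolding P(2) by auto
    also have "zariski_closed \<dots>"
      using P(1) D by (intro zariski_closed_zero_set) (auto intro: pf_mult)
    finally show ?thesis .
  qed
  have "S \<subseteq> {x. D x = 0 \<or> x \<in> A} \<or> S \<subseteq> {x. D x = 0 \<or> x \<in> B}"
    using cover by (intro zariski_irreducibleD[OF irr] times_D A B) auto
  then show "{x\<in>S. D x \<noteq> 0} \<subseteq> A \<or> {x\<in>S. D x \<noteq> 0} \<subseteq> B" by blast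
qed

lemma zariski_irreducible_product:
  fixes X :: "('c1 \<Rightarrow> 'k::field) set" and Y :: "('c2 \<Rightarrow> 'k) set"
  assumes X: "zariski_irreducible X" and Y: "zariski_irreducible Y"
  shows "zariski_irreducible {case_sum x y |x y. x \<in> X \<and> y \<in> Y}"
  unfolding zariski_irreducible_def
proof (intro conjI allI impI)
  show "{case_sum x y |x y. x \<in> X \<and> y \<in> Y} \<noteq> {}"
    using zariski_irreducible_nonempty[OF X] zariski_irreducible_nonempty[OF Y] by blast
  fix A B :: "('c1 + 'c2 \<Rightarrow> 'k) set"
  assume A: "zariski_closed A" and B: "zariski_closed B"
    and cover: "{case_sum x y |x y. x \<in> X \<and> y \<in> Y} \<subseteq> A \<union> B"
  have slice_poly: "(\<lambda>x. p (case_sum x y)) \<in> polyfun" if "p \<in> polyfun"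
    for p :: "('c1 + 'c2 \<Rightarrow> 'k) \<Rightarrow> 'k" and y :: "'c2 \<Rightarrow> 'k"
  proof (rule polyfun_compose[OF that])
    fix c show "(\<lambda>x :: 'c1 \<Rightarrow> 'k. case_sum x y c) \<in> polyfun"
      by (cases c) (simp_all add: pf_const pf_proj)
  qed
  have fibre_closed: "zariski_closed {x. \<forall>y\<in>Y. case_sum x y \<in> C}"
    if C: "zariski_closed C" for C :: "('c1 + 'c2 \<Rightarrow> 'k) set"
  proof -
    obtain P where P: "P \<subseteq> polyfun" "C = {x. \<forall>p\<in>P. p x = 0}" using C by (rule zariski_closedE)
    have "{x. \<forall>y\<in>Y. case_sum x y \<in> C} =
        {x. \<forall>r\<in>(\<lambda>(p, y) x. p (case_sum x y)) ` (P \<times> Y). r x = 0}"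
      unfolding P(2) by auto
    also have "zariski_closed \<dots>" using P(1) slice_poly by (intro zariski_closed_zero_set) auto
    finally show ?thesis .
  qed
  have "(\<lambda>y. case_sum x y) ` Y \<subseteq> A \<or> (\<lambda>y. case_sum x y) ` Y \<subseteq> B" if "x \<in> X" for x
  proof (rule zariski_irreducibleD[OF zariski_irreducible_image[OF Y] A B])
    show "regular_map_on Y (\<lambda>y. case_sum x y)"
    proof (rule regular_map_on_polyfun)
      fix c show "(\<lambda>y :: 'c2 \<Rightarrow> 'k. case_sum x y c) \<in> polyfun"
        by (cases c) (simp_all add: pf_const pf_proj)
    qed
  qed (use cover that in blast)
  then have "X \<subseteq> {x. \<forall>y\<in>Y. case_sum x y \<in> A} \<union> {x. \<forall>y\<in>Y. case_sum x y \<in> B}" by blast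
  then have "X \<subseteq> {x. \<forall>y\<in>Y. case_sum x y \<in> A} \<or> X \<subseteq> {x. \<forall>y\<in>Y. case_sum x y \<in> B}"
    using fibre_closed A B by (intro zariski_irreducibleD[OF X]) auto
  then show "{case_sum x y |x y. x \<in> X \<and> y \<in> Y} \<subseteq> A \<or>
      {case_sum x y |x y. x \<in> X \<and> y \<in> Y} \<subseteq> B" by blast
qed

lemma alg_closed_infinite:
  assumes "alg_closed TYPE('k::field)"
  shows "infinite (UNIV :: 'k set)"
proof
  assume fin: "finite (UNIV :: 'k set)"
  \<comment> \<open>the polynomial 1 + \<Prod>a. (X - a) has no root\<close>
  define P :: "'k poly" where "P = (\<Prod>a\<in>UNIV. [:-a, 1:])"
  have "degree P = card (UNIV :: 'k set)"
    unfolding P_def by (subst degree_prod_eq_sum_degree) auto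
  then have "degree (P + 1) > 0" using fin by (simp add: degree_add_eq_left card_gt_0_iff)
  then obtain z where z: "poly (P + 1) z = 0" using assms unfolding alg_closed_def by blast
  have "poly P z = 0" using fin unfolding P_def poly_prod by (intro prod_zero) auto
  then show False using z by simp
qed

lemma polyfun_line_eq_poly:
  fixes p :: "(unit \<Rightarrow> 'k::field) \<Rightarrow> 'k"
  assumes "p \<in> polyfun"
  obtains P where "\<And>y. p y = poly P (y ())"
proof -
  have "\<exists>P. \<forall>y. p y = poly P (y ())"
    using assms
  proof induction
    case (pf_const c) show ?case by (rule exI[of _ "[:c:]"]) simp
  next
    case (pf_proj i) show ?case by (rule exI[of _ "[:0, 1:]"]) simp
  next
    case (pf_add p q)
    then obtain P Q where "\<forall>y. p y = poly P (y ())" "\<forall>y. q y = poly Q (y ())" by blast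
    then show ?case by (intro exI[of _ "P + Q"]) simp
  next
    case (pf_mult p q)
    then obtain P Q where "\<forall>y. p y = poly P (y ())" "\<forall>y. q y = poly Q (y ())" by blast
    then show ?case by (intro exI[of _ "P * Q"]) simp
  qed
  then show thesis using that by blast
qed

lemma zariski_irreducible_line:
  assumes inf: "infinite (UNIV :: 'k::field set)"
  shows "zariski_irreducible (UNIV :: (unit \<Rightarrow> 'k) set)"
  unfolding zariski_irreducible_def
proof (intro conjI allI impI)
  fix A B :: "(unit \<Rightarrow> 'k) set"
  assume A: "zariski_closed A" and B: "zariski_closed B" and cover: "UNIV \<subseteq> A \<union> B"
  obtain P where P: "P \<subseteq> polyfun" "A = {x. \<forall>p\<in>P. p x = 0}" using A by (rule zariski_closedE)
  obtain Q where Q: "Q \<subseteq> polyfun" "B = {x. \<forall>p\<in>Q. p x = 0}" using B by (rule zariski_closedE)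
  show "UNIV \<subseteq> A \<or> UNIV \<subseteq> B"
  proof (rule ccontr)
    assume "\<not> (UNIV \<subseteq> A \<or> UNIV \<subseteq> B)"
    then obtain p q a b where pq: "p \<in> P" "p a \<noteq> 0" "q \<in> Q" "q b \<noteq> 0" using P Q by auto
    obtain PP where PP: "\<And>y. p y = poly PP (y ())" using polyfun_line_eq_poly[of p] pq P by blast
    obtain QQ where QQ: "\<And>y. q y = poly QQ (y ())" using polyfun_line_eq_poly[of q] pq Q by blast
    \<comment> \<open>p * q vanishes on the whole line, which is infinite\<close>
    have "poly (PP * QQ) c = 0" for c
    proof -
      have "(\<lambda>_. c) \<in> A \<union> B" using cover by blast
      then have "p (\<lambda>_. c) = 0 \<or> q (\<lambda>_. c) = 0" using P Q pq by auto
      then show ?thesis by (auto simp: PP QQ)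
    qed
    then have "PP * QQ = 0" using inf poly_roots_finite[of "PP * QQ"] by auto
    then show False using pq PP QQ by auto
  qed
qed simp

section \<open>Padded matrices\<close>

lemma sum_lessThan_add:
  "(\<Sum>k<m + n. g k) = (\<Sum>k<m. g k) + (\<Sum>k<n. g (k + m))" for g :: "nat \<Rightarrow> 'a::comm_monoid_add"
  by (induction n) (simp_all add: ac_simps)

lemma mmult_assoc: "mmult (mmult A n B) m C = mmult A n (mmult B m C)"
  unfolding mmult_def
  by (intro ext) (simp add: sum_distrib_left sum_distrib_right mult.assoc sum.swap[of _ "{..<m}"])

lemma in_mat_mmult: "in_mat m k A \<Longrightarrow> in_mat k' p B \<Longrightarrow> in_mat m p (mmult A n B)"
  unfolding in_mat_def mmult_def by auto

lemma in_mat_idm: "in_mat n n (idm n)"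
  unfolding in_mat_def idm_def by auto

lemma in_mat_mono: "in_mat m n A \<Longrightarrow> m \<le> m' \<Longrightarrow> n \<le> n' \<Longrightarrow> in_mat m' n' A"
  unfolding in_mat_def by auto

lemma mmult_idm_left_eq:
  "mmult (idm m) n A = (\<lambda>i j. if i < m \<and> i < n then A i j else 0)" for A :: "nat \<Rightarrow> nat \<Rightarrow> 'k::field"
proof (intro ext)
  fix i j
  have "mmult (idm m) n A i j = (\<Sum>k<n. if k = i then (if i < m then A i j else 0) else 0)"
    unfolding mmult_def idm_def by (intro sum.cong) auto
  then show "mmult (idm m) n A i j = (if i < m \<and> i < n then A i j else 0)" by simp
qed

lemma mmult_idm_right_eq:
  "mmult A n (idm m) = (\<lambda>i j. if j < m \<and> j < n then A i j else 0)" for A :: "nat \<Rightarrow> nat \<Rightarrow> 'k::field"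
proof (intro ext)
  fix i j
  have "mmult A n (idm m) i j = (\<Sum>k<n. if k = j then (if j < m then A i j else 0) else 0)"
    unfolding mmult_def idm_def by (intro sum.cong) auto
  then show "mmult A n (idm m) i j = (if j < m \<and> j < n then A i j else 0)" by simp
qed

lemma mmult_idm_left: "in_mat n p A \<Longrightarrow> mmult (idm n) n A = A" for A :: "nat \<Rightarrow> nat \<Rightarrow> 'k::field"
  unfolding mmult_idm_left_eq in_mat_def by (intro ext) auto

lemma mmult_idm_right: "in_mat m n A \<Longrightarrow> mmult A n (idm n) = A" for A :: "nat \<Rightarrow> nat \<Rightarrow> 'k::field"
  unfolding mmult_idm_right_eq in_mat_def by (intro ext) auto

lemma regular_on_mmult:
  assumes "\<And>i k. regular_on S (\<lambda>z. A z i k)" "\<And>k j. regular_on S (\<lambda>z. B z k j)"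
  shows "regular_on S (\<lambda>z. mmult (A z) n (B z) i j)"
  unfolding mmult_def by (intro regular_on_sum regular_on_mult assms finite_lessThan)

lemma injective_mat_iff_mmult:
  fixes A :: "nat \<Rightarrow> nat \<Rightarrow> 'k::field"
  assumes A: "in_mat n m A"
  shows "injective_mat n m A \<longleftrightarrow> (\<forall>v. in_mat m 1 v \<longrightarrow> mmult A m v = (\<lambda>i j. 0) \<longrightarrow> v = (\<lambda>i j. 0))"
proof
  assume inj: "injective_mat n m A"
  show "\<forall>v. in_mat m 1 v \<longrightarrow> mmult A m v = (\<lambda>i j. 0) \<longrightarrow> v = (\<lambda>i j. 0)"
  proof (intro allI impI)
    fix v assume v: "in_mat m 1 v" and Av: "mmult A m v = (\<lambda>i j. 0)"
    have "\<forall>i<n. (\<Sum>k<m. A i k * v k 0) = 0" using fun_cong[OF fun_cong[OF Av]]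
      by (simp add: mmult_def)
    moreover have "\<forall>k\<ge>m. v k 0 = 0" using v unfolding in_mat_def by simp
    ultimately have "\<forall>k. v k 0 = 0"
      using inj[unfolded injective_mat_def, rule_format, of "\<lambda>k. v k 0"] by blast
    then show "v = (\<lambda>i j. 0)" using v unfolding in_mat_def by (intro ext) (metis less_one not_less)
  qed
next
  assume H: "\<forall>v. in_mat m 1 v \<longrightarrow> mmult A m v = (\<lambda>i j. 0) \<longrightarrow> v = (\<lambda>i j. 0)"
  show "injective_mat n m A"
    unfolding injective_mat_def
  proof (intro allI impI)
    fix w :: "nat \<Rightarrow> 'k" and k
    assume w: "\<forall>j\<ge>m. w j = 0" and Aw: "\<forall>i<n. (\<Sum>j<m. A i j * w j) = 0"
    define u where "u = (\<lambda>i (j::nat). if j = 0 then w i else 0)"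
    have "(\<Sum>k<m. A i k * w k) = 0" for i
      using Aw A unfolding in_mat_def by (cases "i < n") auto
    then have "mmult A m u i j = 0" for i j unfolding mmult_def u_def by (cases "j = 0") simp_all
    then have "mmult A m u = (\<lambda>i j. 0)" by (intro ext)
    moreover have "in_mat m 1 u" using w unfolding in_mat_def u_def by auto
    ultimately have u0: "u = (\<lambda>i j. 0)" using H by blast
    show "w k = 0" using fun_cong[OF fun_cong[OF u0, of k], of 0] unfolding u_def by simp
  qed
qed

lemma injective_mat_idm: "injective_mat n m (idm m :: nat \<Rightarrow> nat \<Rightarrow> 'k::field)" if "m \<le> n"
  using that by (simp add: injective_mat_iff_mmult in_mat_mono[OF in_mat_idm] mmult_idm_left)

lemma injective_mat_mmult_left_inverse:
  fixes f G H :: "nat \<Rightarrow> nat \<Rightarrow> 'k::field"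
  assumes f: "in_mat n m f" "injective_mat n m f"
    and G: "in_mat n n G" and HG: "mmult H n G = idm n"
  shows "injective_mat n m (mmult G n f)"
proof -
  have "v = (\<lambda>i j. 0)" if v: "in_mat m 1 v" and GFv: "mmult (mmult G n f) m v = (\<lambda>i j. 0)" for v
  proof -
    have fv: "in_mat n 1 (mmult f m v)" using f(1) v by (rule in_mat_mmult)
    have "mmult f m v = mmult (mmult H n G) n (mmult f m v)" by (simp add: HG mmult_idm_left[OF fv])
    also have "\<dots> = (\<lambda>i j. 0)"
      by (simp add: mmult_assoc GFv[unfolded mmult_assoc]) (simp add: mmult_def)
    finally show ?thesis using f v by (simp add: injective_mat_iff_mmult)
  qed
  then show ?thesis using in_mat_mmult[OF G f(1)] by (simp add: injective_mat_iff_mmult)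
qed

definition sq_mat :: "nat \<Rightarrow> (nat \<Rightarrow> nat \<Rightarrow> 'k::field) \<Rightarrow> 'k Matrix.mat" where
  "sq_mat n A = Matrix.mat n n (\<lambda>(i, j). A i j)"

text \<open>The inverse is taken via the adjugate, so that its entries are visibly regular
  functions of A.\<close>

definition minv :: "nat \<Rightarrow> (nat \<Rightarrow> nat \<Rightarrow> 'k::field) \<Rightarrow> nat \<Rightarrow> nat \<Rightarrow> 'k" where
  "minv n A =
    (\<lambda>i j. if i < n \<and> j < n then adj_mat (sq_mat n A) $$ (i, j) / det (sq_mat n A) else 0)"

lemma sq_mat_carrier [simp]: "sq_mat n A \<in> carrier_mat n n"
  unfolding sq_mat_def by simp

lemma sq_mat_mmult: "sq_mat n (mmult A n B) = sq_mat n A * sq_mat n B"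
  by (rule eq_matI) (auto simp: sq_mat_def mmult_def scalar_prod_def atLeast0LessThan)

lemma sq_mat_idm: "sq_mat n (idm n) = (1\<^sub>m n :: 'k::field Matrix.mat)"
  by (rule eq_matI) (auto simp: sq_mat_def idm_def)

lemma sq_mat_inject: "in_mat n n A \<Longrightarrow> in_mat n n B \<Longrightarrow> sq_mat n A = sq_mat n B \<Longrightarrow> A = B"
  unfolding in_mat_def sq_mat_def by (intro ext) (metis index_mat(1) not_less prod.simps(2))

lemma in_mat_minv: "in_mat n n (minv n A)"
  unfolding in_mat_def minv_def by auto

lemma sq_mat_minv: "sq_mat n (minv n A) = (1 / det (sq_mat n A)) \<cdot>\<^sub>m adj_mat (sq_mat n A)"
proof -
  have "adj_mat (sq_mat n A) \<in> carrier_mat n n" by (rule adj_mat(1)[OF sq_mat_carrier])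
  then show ?thesis unfolding sq_mat_def[of n "minv n A"] by (intro eq_matI) (auto simp: minv_def)
qed

lemma mmult_minv:
  fixes A :: "nat \<Rightarrow> nat \<Rightarrow> 'k::field"
  assumes "det (sq_mat n A) \<noteq> 0" "in_mat n n A"
  shows "mmult A n (minv n A) = idm n" "mmult (minv n A) n A = idm n"
proof -
  have "sq_mat n A * sq_mat n (minv n A) =
      (1 / det (sq_mat n A)) \<cdot>\<^sub>m (sq_mat n A * adj_mat (sq_mat n A))"
    unfolding sq_mat_minv
    by (rule mult_smult_distrib[OF sq_mat_carrier adj_mat(1)[OF sq_mat_carrier]])
  also have "\<dots> = 1\<^sub>m n"
    using adj_mat(2)[OF sq_mat_carrier[of n A]] assms(1) by (intro eq_matI) auto
  finally have right: "sq_mat n A * sq_mat n (minv n A) = 1\<^sub>m n" .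
  then have left: "sq_mat n (minv n A) * sq_mat n A = 1\<^sub>m n"
    by (rule mat_mult_left_right_inverse[OF sq_mat_carrier sq_mat_carrier])
  show "mmult A n (minv n A) = idm n" "mmult (minv n A) n A = idm n"
    using right left assms(2) in_mat_minv[of n A]
    by (auto intro!: sq_mat_inject in_mat_mmult in_mat_idm simp: sq_mat_mmult sq_mat_idm)
qed

lemma minv_idm: "minv n (idm n) = (idm n :: nat \<Rightarrow> nat \<Rightarrow> 'k::field)"
proof -
  have "minv n (idm n) = mmult (minv n (idm n)) n (idm n :: nat \<Rightarrow> nat \<Rightarrow> 'k)"
    by (simp add: mmult_idm_right[OF in_mat_minv])
  also have "\<dots> = idm n" by (rule mmult_minv(2)) (simp_all add: sq_mat_idm in_mat_idm)
  finally show ?thesis .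
qed

lemma det_sq_mat_nonzero_iff_injective:
  fixes A :: "nat \<Rightarrow> nat \<Rightarrow> 'k::field"
  assumes A: "in_mat n n A"
  shows "det (sq_mat n A) \<noteq> 0 \<longleftrightarrow> injective_mat n n A"
proof
  assume "det (sq_mat n A) \<noteq> 0"
  then show "injective_mat n n A"
    using injective_mat_mmult_left_inverse[OF in_mat_idm injective_mat_idm A mmult_minv(2)] A
    by (simp add: mmult_idm_right[OF A])
next
  assume inj: "injective_mat n n A"
  show "det (sq_mat n A) \<noteq> 0"
  proof
    assume "det (sq_mat n A) = 0"
    then obtain v where v: "v \<in> carrier_vec n" "v \<noteq> 0\<^sub>v n" "sq_mat n A *\<^sub>v v = 0\<^sub>v n"
      using det_0_iff_vec_prod_zero_field[OF sq_mat_carrier] by blast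
    define w where "w j = (if j < n then v $ j else 0)" for j
    have "(sq_mat n A *\<^sub>v v) $ i = (\<Sum>j<n. A i j * w j)" if "i < n" for i
      using that v(1) unfolding sq_mat_def mult_mat_vec_def scalar_prod_def w_def
      by (auto simp: atLeast0LessThan intro!: sum.cong)
    then have "\<forall>i<n. (\<Sum>j<n. A i j * w j) = 0" using v(3) by simp
    moreover have "\<forall>j\<ge>n. w j = 0" unfolding w_def by simp
    ultimately have w0: "\<forall>j. w j = 0" using inj unfolding injective_mat_def by blast
    have "v $ j = 0" if "j < n" for j using w0[rule_format, of j] that unfolding w_def by simp
    then have "v = 0\<^sub>v n" using v(1) by (intro eq_vecI) auto
    then show False using v(2) by simp
  qed
qed

lemma polyfun_det:
  assumes N: "\<And>z. N z \<in> carrier_mat n n"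
    and entries: "\<And>i j. i < n \<Longrightarrow> j < n \<Longrightarrow> (\<lambda>z. N z $$ (i, j)) \<in> polyfun"
  shows "(\<lambda>z. det (N z)) \<in> polyfun"
proof -
  have "dim_row (N z) = n" "dim_col (N z) = n" for z using N[of z] by auto
  then have "(\<lambda>z. det (N z)) =
      (\<lambda>z. \<Sum>p\<in>{p. p permutes {0..<n}}. of_int (sign p) * (\<Prod>i\<in>{0..<n}. N z $$ (i, p i)))"
    by (intro ext) (simp add: det_def)
  also have "\<dots> \<in> polyfun"
  proof (intro polyfun_sum pf_mult[OF pf_const] polyfun_prod finite_permutations)
    fix p i assume "p \<in> {p. p permutes {0..<n}}" "i \<in> {0..<n}"
    then show "(\<lambda>z. N z $$ (i, p i)) \<in> polyfun"
      using entries permutes_in_image[of p "{0..<n}" i] by auto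
  qed auto
  finally show ?thesis .
qed

lemma polyfun_det_sq_mat:
  "(\<And>i j. (\<lambda>z. M z i j) \<in> polyfun) \<Longrightarrow> (\<lambda>z. det (sq_mat n (M z))) \<in> polyfun"
  by (rule polyfun_det) (auto simp: sq_mat_def)

lemma polyfun_adj_sq_mat:
  assumes entries: "\<And>i j. (\<lambda>z. M z i j) \<in> polyfun" and ij: "i < n" "j < n"
  shows "(\<lambda>z. adj_mat (sq_mat n (M z)) $$ (i, j)) \<in> polyfun"
proof -
  have "(\<lambda>z. adj_mat (sq_mat n (M z)) $$ (i, j)) =
      (\<lambda>z. (- 1) ^ (j + i) * det (mat_delete (sq_mat n (M z)) j i))"
    using ij by (auto simp: adj_mat_def cofactor_def sq_mat_def)
  also have "\<dots> \<in> polyfun"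
    by (intro pf_mult[OF pf_const] polyfun_det) (auto simp: mat_delete_def sq_mat_def entries)
  finally show ?thesis .
qed

lemma regular_on_minv:
  assumes "\<And>i j. (\<lambda>z. M z i j) \<in> polyfun" "\<And>z. z \<in> S \<Longrightarrow> det (sq_mat n (M z)) \<noteq> 0"
  shows "regular_on S (\<lambda>z. minv n (M z) i j)"
proof (cases "i < n \<and> j < n")
  case True
  have "regular_on S (\<lambda>z. adj_mat (sq_mat n (M z)) $$ (i, j) / det (sq_mat n (M z)))"
    using True assms by (intro regular_on_divide polyfun_adj_sq_mat polyfun_det_sq_mat) auto
  then show ?thesis unfolding minv_def using True by simp
next
  case False
  then have "(\<lambda>z. minv n (M z) i j) = (\<lambda>z. 0)" unfolding minv_def by auto
  then show ?thesis by (simp add: regular_on_const)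
qed

lemma unit_vector_not_in_span:
  fixes f :: "nat \<Rightarrow> nat \<Rightarrow> 'k::field"
  assumes f: "in_mat n m f" and mn: "m < n"
  shows "\<exists>i0<n. \<not> (\<exists>c. \<forall>i<n. (\<Sum>j<m. f i j * c j) = (if i = i0 then 1 else 0))"
proof (rule ccontr)
  assume "\<not> ?thesis"
  then have "\<forall>i0. \<exists>c. i0 < n \<longrightarrow> (\<forall>i<n. (\<Sum>j<m. f i j * c j) = (if i = i0 then 1 else 0))"
    by blast
  from choice[OF this] obtain c
    where c: "\<And>i0 i. i0 < n \<Longrightarrow> i < n \<Longrightarrow> (\<Sum>j<m. f i j * c i0 j) = (if i = i0 then 1 else 0)"
    by blast
  \<comment> \<open>then f has a right inverse, although its column m vanishes\<close>
  define C where "C = (\<lambda>j i0. if i0 < n then c i0 j else 0)"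
  have "mmult f n C i i0 = idm n i i0" for i i0
  proof (cases "i < n \<and> i0 < n")
    case True
    have "mmult f n C i i0 = (\<Sum>j<m. f i j * C j i0)"
      unfolding mmult_def using f mn by (intro sum.mono_neutral_right) (auto simp: in_mat_def)
    then show ?thesis using c True unfolding C_def idm_def by simp
  next
    case False
    then show ?thesis using f unfolding mmult_def idm_def C_def in_mat_def by auto
  qed
  then have "mmult f n C = idm n" by (intro ext)
  then have "sq_mat n f * sq_mat n C = 1\<^sub>m n" by (simp add: sq_mat_idm flip: sq_mat_mmult)
  then have "det (sq_mat n f) * det (sq_mat n C) = 1"
    by (simp flip: det_mult[OF sq_mat_carrier sq_mat_carrier])
  moreover have fn: "in_mat n n f" using in_mat_mono[OF f] mn by simp
  ultimately have inj: "injective_mat n n f" by (auto simp flip: det_sq_mat_nonzero_iff_injective)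
  define u where "u = (\<lambda>j::nat. if j = m then (1::'k) else 0)"
  have "(\<Sum>j<n. f i j * u j) = (\<Sum>j<n. if j = m then f i m else 0)" for i
    unfolding u_def by (intro sum.cong) auto
  then have "\<forall>i<n. (\<Sum>j<n. f i j * u j) = 0" using f mn unfolding in_mat_def by simp
  moreover have "\<forall>j\<ge>n. u j = 0" using mn by (simp add: u_def)
  ultimately have "u m = 0" using inj unfolding injective_mat_def by blast
  then show False by (simp add: u_def)
qed

lemma injective_mat_add_unit_column:
  fixes f :: "nat \<Rightarrow> nat \<Rightarrow> 'k::field"
  assumes f: "in_mat n m f" "injective_mat n m f"
    and i0: "\<not> (\<exists>c. \<forall>i<n. (\<Sum>j<m. f i j * c j) = (if i = i0 then 1 else 0))"
  shows "injective_mat n (Suc m) (\<lambda>i j. if j = m then (if i = i0 then 1 else 0) else f i j)"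
  unfolding injective_mat_def
proof (intro allI impI)
  let ?f = "\<lambda>i j. if j = m then (if i = i0 then 1 else 0) else f i j"
  fix v :: "nat \<Rightarrow> 'k" and k
  assume v: "\<forall>j\<ge>Suc m. v j = 0" and fv: "\<forall>i<n. (\<Sum>j<Suc m. ?f i j * v j) = 0"
  have expand: "(\<Sum>j<Suc m. ?f i j * v j) = (\<Sum>j<m. f i j * v j) + (if i = i0 then v m else 0)" for i
  proof -
    have "(\<Sum>j<m. ?f i j * v j) = (\<Sum>j<m. f i j * v j)" by (intro sum.cong) auto
    then show ?thesis by simp
  qed
  have vm: "v m = 0"
  proof (rule ccontr)
    assume vm: "v m \<noteq> 0"
    \<comment> \<open>otherwise the unit vector i0 is a combination of the columns of f\<close>
    have "(\<Sum>j<m. f i j * (- v j / v m)) = (if i = i0 then 1 else 0)" if "i < n" for i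
    proof -
      have "(\<Sum>j<m. f i j * (- v j / v m)) = - (\<Sum>j<m. f i j * v j) / v m"
        by (simp add: sum_divide_distrib sum_negf)
      also have "- (\<Sum>j<m. f i j * v j) = (if i = i0 then v m else 0)"
        using fv that expand[of i] by (simp add: neg_eq_iff_add_eq_0)
      finally show ?thesis using vm by simp
    qed
    then have "\<exists>c. \<forall>i<n. (\<Sum>j<m. f i j * c j) = (if i = i0 then 1 else 0)"
      by (intro exI[of _ "\<lambda>j. - v j / v m"]) blast
    then show False using i0 by blast
  qed
  define w where "w j = (if j < m then v j else 0)" for j
  have "(\<Sum>j<m. f i j * w j) = (\<Sum>j<m. f i j * v j)" for i unfolding w_def by (intro sum.cong) auto
  then have "\<forall>i<n. (\<Sum>j<m. f i j * w j) = 0" using fv vm by (simp add: expand)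
  moreover have "\<forall>j\<ge>m. w j = 0" unfolding w_def by simp
  ultimately have w0: "\<forall>j. w j = 0" using f(2) unfolding injective_mat_def by blast
  consider "k < m" | "k = m" | "Suc m \<le> k" by linarith
  then show "v k = 0"
    by cases (use w0[rule_format, of k] vm v in \<open>simp_all add: w_def\<close>)
qed

lemma exists_invertible_extension:
  fixes f :: "nat \<Rightarrow> nat \<Rightarrow> 'k::field"
  assumes "in_mat n m f" "injective_mat n m f" "m \<le> n"
  shows "\<exists>g. in_mat n n g \<and> det (sq_mat n g) \<noteq> 0 \<and> (\<forall>i j. j < m \<longrightarrow> g i j = f i j)"
  using assms
proof (induction "n - m" arbitrary: m f)
  case 0
  then have "m = n" by simp
  then show ?case using 0 by (intro exI[of _ f]) (simp add: det_sq_mat_nonzero_iff_injective)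
next
  case (Suc k)
  then have mn: "m < n" by simp
  obtain i0 where i0: "i0 < n" "\<not> (\<exists>c. \<forall>i<n. (\<Sum>j<m. f i j * c j) = (if i = i0 then 1 else 0))"
    using unit_vector_not_in_span[OF Suc.prems(1) mn] by blast
  let ?f = "\<lambda>i j. if j = m then (if i = i0 then 1 else 0) else f i j"
  have "in_mat n (Suc m) ?f" using Suc.prems(1) i0(1) unfolding in_mat_def by auto
  moreover have "injective_mat n (Suc m) ?f"
    using injective_mat_add_unit_column[OF Suc.prems(1,2) i0(2)] .
  moreover have "k = n - Suc m" "Suc m \<le> n" using Suc.hyps(2) mn by auto
  ultimately have "\<exists>g. in_mat n n g \<and> det (sq_mat n g) \<noteq> 0 \<and> (\<forall>i j. j < Suc m \<longrightarrow> g i j = ?f i j)"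
    by (intro Suc.hyps(1))
  then show ?case by auto
qed

definition invertible_family :: "('v \<Rightarrow> nat) \<Rightarrow> ('v \<Rightarrow> nat \<Rightarrow> nat \<Rightarrow> 'k::field) \<Rightarrow> bool"
  where "invertible_family D G \<longleftrightarrow> (\<forall>x. in_mat (D x) (D x) (G x) \<and> det (sq_mat (D x) (G x)) \<noteq> 0)"

lemma invertible_family_idm: "invertible_family D (\<lambda>x. idm (D x) :: nat \<Rightarrow> nat \<Rightarrow> 'k::field)"
  unfolding invertible_family_def by (simp add: in_mat_idm sq_mat_idm)

section \<open>Representations\<close>

lemma pathalg_valid_path:
  "\<rho> \<in> pathalg s t \<Longrightarrow> \<rho> p \<noteq> 0 \<Longrightarrow> valid_path s t (fst p) (snd p)"
  unfolding pathalg_def by blast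

lemma pathalg_finite_support: "\<rho> \<in> pathalg s t \<Longrightarrow> finite {p. \<rho> p \<noteq> 0 \<and> P p}"
  by (rule finite_subset[of _ "{p. \<rho> p \<noteq> 0}"]) (auto simp: pathalg_def)

lemma admissible_ideal_pathalg: "admissible_ideal s t I \<Longrightarrow> I \<subseteq> pathalg s t"
  unfolding admissible_ideal_def two_sided_ideal_def by blast

lemma zero_in_rep:
  assumes "admissible_ideal s t I"
  shows "(\<lambda>a i j. 0) \<in> rep s t I D"
proof -
  have "path_eval t D (\<lambda>a i j. 0) x (snd p) i j = 0" if "\<rho> \<in> I" "\<rho> p \<noteq> 0" for \<rho> p x i j
  proof -
    have "2 \<le> length (snd p)" using assms that unfolding admissible_ideal_def by blast
    then obtain a l where "snd p = a # l" by (cases "snd p") auto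
    then show ?thesis by (simp add: mmult_def)
  qed
  then show ?thesis
    unfolding rep_def satisfies_def is_mat_family_def in_mat_def by (auto intro!: sum.neutral)
qed

definition inverse_pair ::
    "('v \<Rightarrow> nat) \<Rightarrow> ('v \<Rightarrow> nat \<Rightarrow> nat \<Rightarrow> 'k::field) \<Rightarrow> ('v \<Rightarrow> nat \<Rightarrow> nat \<Rightarrow> 'k) \<Rightarrow> bool"
  where "inverse_pair D P Q \<longleftrightarrow> (\<forall>x. in_mat (D x) (D x) (P x) \<and> in_mat (D x) (D x) (Q x) \<and>
      mmult (P x) (D x) (Q x) = idm (D x) \<and> mmult (Q x) (D x) (P x) = idm (D x))"

definition conj_rep :: "('a \<Rightarrow> 'v) \<Rightarrow> ('a \<Rightarrow> 'v) \<Rightarrow> ('v \<Rightarrow> nat) \<Rightarrow> ('v \<Rightarrow> nat \<Rightarrow> nat \<Rightarrow> 'k::field)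
    \<Rightarrow> ('a \<Rightarrow> nat \<Rightarrow> nat \<Rightarrow> 'k) \<Rightarrow> ('v \<Rightarrow> nat \<Rightarrow> nat \<Rightarrow> 'k) \<Rightarrow> ('a \<Rightarrow> nat \<Rightarrow> nat \<Rightarrow> 'k)"
  where "conj_rep s t D P B Q = (\<lambda>a. mmult (mmult (P (t a)) (D (t a)) (B a)) (D (s a)) (Q (s a)))"

lemma inverse_pair_sym: "inverse_pair D P Q \<Longrightarrow> inverse_pair D Q P"
  unfolding inverse_pair_def by blast

lemma inverse_pair_minv:
  assumes "\<And>x. in_mat (D x) (D x) (G x)" "\<And>x. det (sq_mat (D x) (G x)) \<noteq> 0"
  shows "inverse_pair D G (\<lambda>x. minv (D x) (G x))"
  unfolding inverse_pair_def using assms by (simp add: in_mat_minv mmult_minv)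

lemma path_eval_conj_rep:
  assumes "valid_path s t x l" "is_mat_family s t D D B" "inverse_pair D P Q"
  shows "path_eval t D (conj_rep s t D P B Q) x l =
    mmult (mmult (P (path_end t x l)) (D (path_end t x l)) (path_eval t D B x l)) (D x) (Q x)"
  using assms
proof (induction l arbitrary: x)
  case Nil
  have "in_mat (D x) (D x) (P x)" "mmult (P x) (D x) (Q x) = idm (D x)"
    using Nil.prems(3) unfolding inverse_pair_def by auto
  then show ?case by (simp add: mmult_idm_right)
next
  case (Cons a as)
  then have a: "s a = x" "in_mat (D (t a)) (D x) (B a)" and as: "valid_path s t (t a) as"
    by (auto simp: is_mat_family_def)
  have QP: "mmult (Q (t a)) (D (t a)) (P (t a)) = idm (D (t a))"
    using Cons.prems(3) unfolding inverse_pair_def by blast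
  have "in_mat (D (t a)) (D x) (mmult (B a) (D x) (Q x))"
    by (rule in_mat_mmult[OF a(2)]) (use Cons.prems(3) in \<open>auto simp: inverse_pair_def\<close>)
  then have cancel: "mmult (Q (t a)) (D (t a)) (mmult (P (t a)) (D (t a)) (mmult (B a) (D x) (Q x)))
      = mmult (B a) (D x) (Q x)"
    by (simp add: QP mmult_idm_left[OF a(2)] flip: mmult_assoc)
  show ?case
    using Cons.IH[OF as Cons.prems(2,3)] a(1) cancel by (simp add: conj_rep_def mmult_assoc)
qed

lemma sum_scaled_conj_mmult:
  fixes c :: "'p \<Rightarrow> 'k::field"
  assumes "finite S"
  shows "(\<Sum>p\<in>S. c p * mmult (mmult P n (M p)) m Q i j) =
    mmult (mmult P n (\<lambda>k l. \<Sum>p\<in>S. c p * M p k l)) m Q i j"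
  using assms
proof (induction S rule: finite_induct)
  case (insert a S)
  then show ?case
    by (simp add: mmult_def sum_distrib_left sum.distrib[symmetric] distrib_left distrib_right
        mult_ac)
qed (simp add: mmult_def)

lemma satisfies_conj_rep:
  assumes sat: "satisfies t D B \<rho>" and \<rho>: "\<rho> \<in> pathalg s t"
    and B: "is_mat_family s t D D B" and PQ: "inverse_pair D P Q"
  shows "satisfies t D (conj_rep s t D P B Q) \<rho>"
  unfolding satisfies_def
proof (intro allI)
  fix x y i j
  let ?S = "{p. \<rho> p \<noteq> 0 \<and> fst p = x \<and> path_end t x (snd p) = y}"
  have "(\<Sum>p\<in>?S. \<rho> p * path_eval t D (conj_rep s t D P B Q) x (snd p) i j) =
      (\<Sum>p\<in>?S. \<rho> p * mmult (mmult (P y) (D y) (path_eval t D B x (snd p))) (D x) (Q x) i j)"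
    using path_eval_conj_rep[OF pathalg_valid_path[OF \<rho>] B PQ] by (intro sum.cong) auto
  also have "\<dots> = mmult (mmult (P y) (D y)
      (\<lambda>k l. \<Sum>p\<in>?S. \<rho> p * path_eval t D B x (snd p) k l)) (D x) (Q x) i j"
    using pathalg_finite_support[OF \<rho>] by (rule sum_scaled_conj_mmult)
  also have "\<dots> = 0" using sat unfolding satisfies_def by (simp add: mmult_def)
  finally show "(\<Sum>p\<in>?S. \<rho> p * path_eval t D (conj_rep s t D P B Q) x (snd p) i j) = 0" .
qed

lemma conj_rep_in_rep:
  assumes "B \<in> rep s t I D" "I \<subseteq> pathalg s t" "inverse_pair D P Q"
  shows "conj_rep s t D P B Q \<in> rep s t I D"
proof -
  have B: "is_mat_family s t D D B" using assms(1) unfolding rep_def by blast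
  have "in_mat (D (t a)) (D (s a)) (conj_rep s t D P B Q a)" for a
  proof -
    have "in_mat (D (t a)) (D (t a)) (P (t a))" "in_mat (D (s a)) (D (s a)) (Q (s a))"
      "in_mat (D (t a)) (D (s a)) (B a)"
      using assms(3) B unfolding inverse_pair_def is_mat_family_def by auto
    then show ?thesis unfolding conj_rep_def by (blast intro: in_mat_mmult[OF in_mat_mmult])
  qed
  then show ?thesis
    using assms B satisfies_conj_rep[of t D B _ s P Q] unfolding rep_def is_mat_family_def by blast
qed

lemma conj_rep_conj_rep:
  assumes "is_mat_family s t D D B" "inverse_pair D P Q"
  shows "conj_rep s t D Q (conj_rep s t D P B Q) P = B"
proof
  fix a
  have B: "in_mat (D (t a)) (D (s a)) (B a)" using assms(1) unfolding is_mat_family_def by blast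
  have "conj_rep s t D Q (conj_rep s t D P B Q) P a =
      mmult (mmult (Q (t a)) (D (t a)) (P (t a))) (D (t a))
        (mmult (B a) (D (s a)) (mmult (Q (s a)) (D (s a)) (P (s a))))"
    unfolding conj_rep_def by (simp add: mmult_assoc)
  also have "\<dots> = B a"
    using assms(2) B unfolding inverse_pair_def
    by (simp add: mmult_idm_right[OF B] mmult_idm_left[OF B])
  finally show "conj_rep s t D Q (conj_rep s t D P B Q) P a = B a" .
qed

lemma conj_rep_idm:
  assumes "is_mat_family s t D D B"
  shows "conj_rep s t D (\<lambda>x. idm (D x)) B (\<lambda>x. idm (D x)) = (B :: 'a \<Rightarrow> nat \<Rightarrow> nat \<Rightarrow> 'k::field)"
proof
  fix a
  have B: "in_mat (D (t a)) (D (s a)) (B a)" using assms unfolding is_mat_family_def by blast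
  show "conj_rep s t D (\<lambda>x. idm (D x)) B (\<lambda>x. idm (D x)) a = B a"
    unfolding conj_rep_def by (simp add: mmult_idm_left[OF B] mmult_idm_right[OF B])
qed

lemma regular_on_conj_rep:
  assumes "\<And>x i j. regular_on S (\<lambda>z. P z x i j)" "\<And>a i j. regular_on S (\<lambda>z. B z a i j)"
    "\<And>x i j. regular_on S (\<lambda>z. Q z x i j)"
  shows "regular_on S (\<lambda>z. conj_rep s t D (P z) (B z) (Q z) a i j)"
  unfolding conj_rep_def by (intro regular_on_mmult assms)

definition upper_block :: "('a \<Rightarrow> 'v) \<Rightarrow> ('a \<Rightarrow> 'v) \<Rightarrow> ('v \<Rightarrow> nat) \<Rightarrow> ('a \<Rightarrow> nat \<Rightarrow> nat \<Rightarrow> 'k::zero)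
    \<Rightarrow> ('a \<Rightarrow> nat \<Rightarrow> nat \<Rightarrow> 'k)"
  where "upper_block s t d B = (\<lambda>a i j. if i < d (t a) then B a i (j + d (s a)) else 0)"

definition lower_block :: "('a \<Rightarrow> 'v) \<Rightarrow> ('a \<Rightarrow> 'v) \<Rightarrow> ('v \<Rightarrow> nat) \<Rightarrow> ('a \<Rightarrow> nat \<Rightarrow> nat \<Rightarrow> 'k)
    \<Rightarrow> ('a \<Rightarrow> nat \<Rightarrow> nat \<Rightarrow> 'k)"
  where "lower_block s t d B = (\<lambda>a i j. B a (i + d (t a)) (j + d (s a)))"

lemma lower_block_blockrep: "lower_block s t d (blockrep s t d V Z U) = U"
  unfolding lower_block_def blockrep_def by (intro ext) simp

lemma upper_block_blockrep:
  "is_mat_family s t d e Z \<Longrightarrow> upper_block s t d (blockrep s t d V Z U) = Z"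
  unfolding upper_block_def blockrep_def is_mat_family_def in_mat_def by (intro ext) auto

lemma is_mat_family_blockrep:
  assumes "is_mat_family s t d d V" "is_mat_family s t d e Z" "is_mat_family s t e e U"
  shows "is_mat_family s t (\<lambda>x. d x + e x) (\<lambda>x. d x + e x) (blockrep s t d V Z U)"
  using assms unfolding is_mat_family_def in_mat_def blockrep_def by auto

lemma mmult_blockrep_idm:
  assumes "in_mat (d (t a)) (d (s a)) (V a)"
  shows "mmult (blockrep s t d V Z U a) (d (s a) + e (s a)) (idm (d (s a))) = V a"
  using assms unfolding mmult_idm_right_eq blockrep_def in_mat_def by (intro ext) auto

lemma path_eval_blockrep:
  assumes "valid_path s t x l"
  shows "(\<forall>i j. d (path_end t x l) \<le> i \<longrightarrow> j < d x \<longrightarrow>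
           path_eval t (\<lambda>x. d x + e x) (blockrep s t d V Z U) x l i j = 0) \<and>
         (\<forall>i j. path_eval t (\<lambda>x. d x + e x) (blockrep s t d V Z U) x l
             (i + d (path_end t x l)) (j + d x) = path_eval t e U x l i j)"
  using assms
proof (induction l arbitrary: x)
  case Nil
  show ?case by (auto simp: idm_def)
next
  case (Cons a as)
  let ?B = "blockrep s t d V Z U" and ?D = "\<lambda>x. d x + e x"
  let ?PB = "path_eval t ?D ?B (t a) as" and ?e = "path_end t (t a) as"
  from Cons.prems have sa: "s a = x" and as: "valid_path s t (t a) as" by auto
  have IH1: "\<And>i j. d ?e \<le> i \<Longrightarrow> j < d (t a) \<Longrightarrow> ?PB i j = 0"
    and IH2: "\<And>i j. ?PB (i + d ?e) (j + d (t a)) = path_eval t e U (t a) as i j"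
    using Cons.IH[OF as] by auto
  have split: "mmult ?PB (?D (t a)) (?B a) i j =
      (\<Sum>k<d (t a). ?PB i k * ?B a k j) + (\<Sum>k<e (t a). ?PB i (k + d (t a)) * ?B a (k + d (t a)) j)"
    for i j unfolding mmult_def by (rule sum_lessThan_add)
  have "mmult ?PB (?D (t a)) (?B a) i j = 0" if "d ?e \<le> i" "j < d x" for i j
    using that IH1 sa unfolding split by (simp add: blockrep_def)
  moreover have "mmult ?PB (?D (t a)) (?B a) (i + d ?e) (j + d x) =
      mmult (path_eval t e U (t a) as) (e (t a)) (U a) i j" for i j
    using IH1 IH2 sa unfolding split by (simp add: blockrep_def mmult_def)
  ultimately show ?case by simp
qed

lemma satisfies_lower_block:
  assumes sat: "satisfies t (\<lambda>x. d x + e x) (blockrep s t d V Z U) \<rho>" and \<rho>: "\<rho> \<in> pathalg s t"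
  shows "satisfies t e U \<rho>"
  unfolding satisfies_def
proof (intro allI)
  fix x y i j
  let ?S = "{p. \<rho> p \<noteq> 0 \<and> fst p = x \<and> path_end t x (snd p) = y}"
  have "(\<Sum>p\<in>?S. \<rho> p * path_eval t e U x (snd p) i j) =
      (\<Sum>p\<in>?S. \<rho> p *
        path_eval t (\<lambda>x. d x + e x) (blockrep s t d V Z U) x (snd p) (i + d y) (j + d x))"
  proof (rule sum.cong)
    fix p assume "p \<in> ?S"
    moreover have "valid_path s t x (snd p)" using pathalg_valid_path[OF \<rho>] calculation by auto
    ultimately show "\<rho> p * path_eval t e U x (snd p) i j =
        \<rho> p * path_eval t (\<lambda>x. d x + e x) (blockrep s t d V Z U) x (snd p) (i + d y) (j + d x)"
      using path_eval_blockrep[of s t x "snd p" d e V Z U] by simp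
  qed simp
  also have "\<dots> = 0" using sat unfolding satisfies_def by blast
  finally show "(\<Sum>p\<in>?S. \<rho> p * path_eval t e U x (snd p) i j) = 0" .
qed

lemma blockrep_in_monovar:
  assumes "(U, V, Z) \<in> extvar s t I e d"
  shows "(V, blockrep s t d V Z U, \<lambda>x. idm (d x)) \<in> monovar s t I d (\<lambda>x. d x + e x)"
proof -
  have U: "U \<in> rep s t I e" and V: "V \<in> rep s t I d" and Z: "Z \<in> Zset s t I e d U V"
    using assms unfolding extvar_def by auto
  have "blockrep s t d V Z U \<in> rep s t I (\<lambda>x. d x + e x)"
    using U V Z is_mat_family_blockrep unfolding rep_def Zset_def by auto
  moreover have Vm: "in_mat (d (t a)) (d (s a)) (V a)" for a
    using V unfolding rep_def is_mat_family_def by auto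
  then have "is_hom s t d (\<lambda>x. d x + e x) V (blockrep s t d V Z U) (\<lambda>x. idm (d x))"
    unfolding is_hom_def
    by (simp add: mmult_blockrep_idm[of d t _ s V, OF Vm] mmult_idm_left[OF Vm])
  moreover have "in_mat (d x + e x) (d x) (idm (d x))"
    and "injective_mat (d x + e x) (d x) (idm (d x))" for x
    by (auto intro: in_mat_mono[OF in_mat_idm] injective_mat_idm)
  ultimately show ?thesis using V unfolding monovar_def by auto
qed

lemma monovar_idm_imp_extvar:
  assumes M: "(V, B, \<lambda>x. idm (d x)) \<in> monovar s t I d (\<lambda>x. d x + e x)" and I: "I \<subseteq> pathalg s t"
  shows "(lower_block s t d B, V, upper_block s t d B) \<in> extvar s t I e d"
    and "blockrep s t d V (upper_block s t d B) (lower_block s t d B) = B"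
proof -
  have V: "V \<in> rep s t I d" and B: "B \<in> rep s t I (\<lambda>x. d x + e x)"
    and hom: "is_hom s t d (\<lambda>x. d x + e x) V B (\<lambda>x. idm (d x))"
    using M unfolding monovar_def by auto
  have Vm: "in_mat (d (t a)) (d (s a)) (V a)" for a
    using V unfolding rep_def is_mat_family_def by auto
  have Bm: "in_mat (d (t a) + e (t a)) (d (s a) + e (s a)) (B a)" for a
    using B unfolding rep_def is_mat_family_def by auto
  have first_cols: "mmult (B a) (d (s a) + e (s a)) (idm (d (s a))) = V a" for a
    using hom unfolding is_hom_def by (simp add: mmult_idm_left[OF Vm])
  have left: "B a i j = V a i j" if "j < d (s a)" for a i j
    using that fun_cong[OF fun_cong[OF first_cols[of a], of i], of j]
    by (simp add: mmult_idm_right_eq)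
  show blk: "blockrep s t d V (upper_block s t d B) (lower_block s t d B) = B"
  proof (intro ext)
    fix a i j
    show "blockrep s t d V (upper_block s t d B) (lower_block s t d B) a i j = B a i j"
      using left[of j a i] Vm[of a]
      unfolding blockrep_def upper_block_def lower_block_def in_mat_def by auto
  qed
  have sat: "\<forall>\<rho>\<in>I. satisfies t (\<lambda>x. d x + e x)
      (blockrep s t d V (upper_block s t d B) (lower_block s t d B)) \<rho>"
    using B unfolding blk rep_def by blast
  have "is_mat_family s t e e (lower_block s t d B)"
    using Bm unfolding is_mat_family_def in_mat_def lower_block_def by auto
  moreover have "satisfies t e (lower_block s t d B) \<rho>" if "\<rho> \<in> I" for \<rho>
    using satisfies_lower_block[OF sat[rule_format, OF that]] I that by auto
  ultimately have "lower_block s t d B \<in> rep s t I e" unfolding rep_def by auto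
  moreover have "upper_block s t d B \<in> Zset s t I e d (lower_block s t d B) V"
    using Bm sat unfolding Zset_def is_mat_family_def in_mat_def upper_block_def by auto
  ultimately show "(lower_block s t d B, V, upper_block s t d B) \<in> extvar s t I e d"
    using V unfolding extvar_def by auto
qed

lemma monovar_conj_rep:
  assumes M: "(V, W, f) \<in> monovar s t I e d" and I: "I \<subseteq> pathalg s t" and GH: "inverse_pair d G H"
  shows "(V, conj_rep s t d G W H, \<lambda>x. mmult (G x) (d x) (f x)) \<in> monovar s t I e d"
proof -
  have V: "V \<in> rep s t I e" and W: "W \<in> rep s t I d"
    and f: "\<And>x. in_mat (d x) (e x) (f x)" "\<And>x. injective_mat (d x) (e x) (f x)"
    and hom: "is_hom s t e d V W f"
    using M unfolding monovar_def by auto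
  have G: "in_mat (d x) (d x) (G x)" "mmult (H x) (d x) (G x) = idm (d x)" for x
    using GH unfolding inverse_pair_def by auto
  have "mmult (conj_rep s t d G W H a) (d (s a)) (mmult (G (s a)) (d (s a)) (f (s a))) =
      mmult (mmult (G (t a)) (d (t a)) (f (t a))) (e (t a)) (V a)" for a
  proof -
    have "mmult (H (s a)) (d (s a)) (mmult (G (s a)) (d (s a)) (f (s a))) = f (s a)"
      by (simp add: G(2) mmult_idm_left[OF f(1)] flip: mmult_assoc)
    then show ?thesis
      using hom unfolding conj_rep_def is_hom_def by (simp add: mmult_assoc)
  qed
  moreover have "in_mat (d x) (e x) (mmult (G x) (d x) (f x))" for x
    using G(1) f(1) by (rule in_mat_mmult)
  moreover have "injective_mat (d x) (e x) (mmult (G x) (d x) (f x))" for x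
    using injective_mat_mmult_left_inverse[OF f(1,2) G(1,2)] .
  ultimately show ?thesis
    using V conj_rep_in_rep[OF W I GH] unfolding monovar_def is_hom_def by auto
qed

text \<open>After the base change H, a monomorphism f = G \<iota> becomes the inclusion \<iota> of the first d
  coordinates, so W is conjugate to a block triangular representation.\<close>

lemma monovar_decompose:
  assumes M: "(V, W, f) \<in> monovar s t I d (\<lambda>x. d x + e x)" and I: "I \<subseteq> pathalg s t"
    and GH: "inverse_pair (\<lambda>x. d x + e x) G H"
    and Gf: "\<And>x. mmult (G x) (d x + e x) (idm (d x)) = f x"
  defines "B \<equiv> conj_rep s t (\<lambda>x. d x + e x) H W G"
  shows "(lower_block s t d B, V, upper_block s t d B) \<in> extvar s t I e d"
    and "W = conj_rep s t (\<lambda>x. d x + e x) G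
      (blockrep s t d V (upper_block s t d B) (lower_block s t d B)) H"
proof -
  have HG: "mmult (H x) (d x + e x) (G x) = idm (d x + e x)" for x
    using GH unfolding inverse_pair_def by auto
  have "mmult (H x) (d x + e x) (f x) = idm (d x)" for x
    unfolding Gf[symmetric] mmult_assoc[symmetric] HG
    by (rule mmult_idm_left) (rule in_mat_mono[OF in_mat_idm], auto)
  then have "(V, B, \<lambda>x. idm (d x)) \<in> monovar s t I d (\<lambda>x. d x + e x)"
    using monovar_conj_rep[OF M I inverse_pair_sym[OF GH]] unfolding B_def by simp
  note block = monovar_idm_imp_extvar[OF this I]
  show "(lower_block s t d B, V, upper_block s t d B) \<in> extvar s t I e d" by (fact block(1))
  have "is_mat_family s t (\<lambda>x. d x + e x) (\<lambda>x. d x + e x) W"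
    using M unfolding monovar_def rep_def by auto
  then show "W = conj_rep s t (\<lambda>x. d x + e x) G
      (blockrep s t d V (upper_block s t d B) (lower_block s t d B)) H"
    unfolding block(2) unfolding B_def
    by (rule conj_rep_conj_rep[OF _ inverse_pair_sym[OF GH], symmetric])
qed

lemma zero_in_extvar:
  fixes I :: "(('v \<times> 'a list) \<Rightarrow> 'k::field) set"
  assumes "admissible_ideal s t I"
  shows "((\<lambda>a i j. 0), (\<lambda>a i j. 0), (\<lambda>a i j. 0)) \<in> extvar s t I e d"
proof -
  have "blockrep s t d (\<lambda>a i j. 0) (\<lambda>a i j. 0) (\<lambda>a i j. 0) = (\<lambda>a i j. 0 :: 'k)"
    unfolding blockrep_def by (intro ext) simp
  then have "(\<lambda>a i j. 0) \<in> Zset s t I e d (\<lambda>a i j. 0) (\<lambda>a i j. 0)"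
    using zero_in_rep[OF assms, of "\<lambda>x. d x + e x"]
    unfolding Zset_def rep_def is_mat_family_def in_mat_def by simp
  then show ?thesis using zero_in_rep[OF assms] unfolding extvar_def by simp
qed

section \<open>Transfer of irreducibility\<close>

definition entries1 :: "(('a \<times> nat \<times> nat) + 'r \<Rightarrow> 'k) \<Rightarrow> 'a \<Rightarrow> nat \<Rightarrow> nat \<Rightarrow> 'k"
  where "entries1 z = (\<lambda>a i j. z (Inl (a, i, j)))"

definition entries2 :: "('l + ('b \<times> nat \<times> nat) + 'r \<Rightarrow> 'k) \<Rightarrow> 'b \<Rightarrow> nat \<Rightarrow> nat \<Rightarrow> 'k"
  where "entries2 z = (\<lambda>b i j. z (Inr (Inl (b, i, j))))"

definition entries3 :: "('l + 'm + ('c \<times> nat \<times> nat) \<Rightarrow> 'k) \<Rightarrow> 'c \<Rightarrow> nat \<Rightarrow> nat \<Rightarrow> 'k"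
  where "entries3 z = (\<lambda>x i j. z (Inr (Inr (x, i, j))))"

lemma entries_coords3 [simp]:
  "entries1 (coords3 (A, B, C)) = A" "entries2 (coords3 (A, B, C)) = B"
  "entries3 (coords3 (A, B, C)) = C"
  unfolding entries1_def entries2_def entries3_def coords3_def by simp_all

lemma polyfun_entries:
  "(\<lambda>z. entries1 z a i j) \<in> polyfun" "(\<lambda>z. entries2 z b i j) \<in> polyfun"
  "(\<lambda>z. entries3 z x i j) \<in> polyfun"
  unfolding entries1_def entries2_def entries3_def by (rule pf_proj)+

lemma regular_map_on_coords3:
  assumes "\<And>a i j. regular_on S (\<lambda>z. A z a i j)" "\<And>b i j. regular_on S (\<lambda>z. B z b i j)"
    "\<And>x i j. regular_on S (\<lambda>z. C z x i j)"
  shows "regular_map_on S (\<lambda>z. coords3 (A z, B z, C z))"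
  unfolding regular_map_on_def
proof
  fix c
  show "regular_on S (\<lambda>z. coords3 (A z, B z, C z) c)"
  proof (cases c)
    case (Inl p)
    then show ?thesis using assms(1) by (cases p rule: prod_cases3) (simp add: coords3_def)
  next
    case (Inr q)
    show ?thesis
    proof (cases q)
      case (Inl p)
      then show ?thesis
        using \<open>c = Inr q\<close> assms(2) by (cases p rule: prod_cases3) (simp add: coords3_def)
    next
      case (Inr p)
      then show ?thesis
        using \<open>c = Inr q\<close> assms(3) by (cases p rule: prod_cases3) (simp add: coords3_def)
    qed
  qed
qed

definition extend_units :: "('v \<Rightarrow> nat) \<Rightarrow> ('v \<Rightarrow> nat) \<Rightarrow> ('v \<Rightarrow> nat \<Rightarrow> nat \<Rightarrow> 'k::{zero,one})
    \<Rightarrow> 'v \<Rightarrow> nat \<Rightarrow> nat \<Rightarrow> 'k"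
  where "extend_units d D f x = (\<lambda>i j. if j < d x then f x i j else idm (D x) i j)"

definition ext_of_mono :: "('a \<Rightarrow> 'v) \<Rightarrow> ('a \<Rightarrow> 'v) \<Rightarrow> ('v \<Rightarrow> nat) \<Rightarrow> ('v \<Rightarrow> nat)
    \<Rightarrow> ('a \<Rightarrow> nat \<Rightarrow> nat \<Rightarrow> 'k::field) \<Rightarrow> ('a \<Rightarrow> nat \<Rightarrow> nat \<Rightarrow> 'k) \<Rightarrow> ('v \<Rightarrow> nat \<Rightarrow> nat \<Rightarrow> 'k)
    \<Rightarrow> ('a \<Rightarrow> nat \<Rightarrow> nat \<Rightarrow> 'k) \<times> ('a \<Rightarrow> nat \<Rightarrow> nat \<Rightarrow> 'k) \<times> ('a \<Rightarrow> nat \<Rightarrow> nat \<Rightarrow> 'k)"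
  where "ext_of_mono s t d e V W f =
    (let D = (\<lambda>x. d x + e x); G = extend_units d D f;
         B = conj_rep s t D (\<lambda>x. minv (D x) (G x)) W G
     in (lower_block s t d B, V, upper_block s t d B))"

lemma extend_units_idm:
  "extend_units d (\<lambda>x. d x + e x) (\<lambda>x. idm (d x)) = (\<lambda>x. idm (d x + e x) :: nat \<Rightarrow> nat \<Rightarrow> 'k::field)"
  unfolding extend_units_def idm_def by (intro ext) auto

lemma regular_map_on_ext_of_mono:
  assumes "\<And>a i j. (\<lambda>z. V z a i j) \<in> polyfun" "\<And>a i j. (\<lambda>z. W z a i j) \<in> polyfun"
    and f_poly: "\<And>x i j. (\<lambda>z. f z x i j) \<in> polyfun"
    and det: "\<And>z x. z \<in> S \<Longrightarrow> det (sq_mat (d x + e x) (extend_units d (\<lambda>x. d x + e x) (f z) x)) \<noteq> 0"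
  shows "regular_map_on S (\<lambda>z. coords3 (ext_of_mono s t d e (V z) (W z) (f z)))"
proof -
  let ?D = "\<lambda>x. d x + e x"
  let ?G = "\<lambda>z. extend_units d ?D (f z)"
  have G_poly: "(\<lambda>z. ?G z x i j) \<in> polyfun" for x i j
    unfolding extend_units_def by (intro polyfun_if f_poly pf_const)
  have reg_minv: "regular_on S (\<lambda>z. minv (?D x) (?G z x) i j)" for x i j
    using G_poly det by (rule regular_on_minv)
  have reg_B: "regular_on S (\<lambda>z. conj_rep s t ?D (\<lambda>x. minv (?D x) (?G z x)) (W z) (?G z) a i j)"
    for a i j by (intro regular_on_conj_rep reg_minv regular_on_polyfun G_poly assms(2))
  show ?thesis
    unfolding ext_of_mono_def Let_def upper_block_def lower_block_def
    by (intro regular_map_on_coords3 reg_B regular_on_if regular_on_const regular_on_polyfun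
        assms(1))
qed

lemma ext_of_mono_in_extvar:
  assumes M: "(V, W, f) \<in> monovar s t I d (\<lambda>x. d x + e x)" and I: "I \<subseteq> pathalg s t"
    and det: "\<And>x. det (sq_mat (d x + e x) (extend_units d (\<lambda>x. d x + e x) f x)) \<noteq> 0"
  shows "ext_of_mono s t d e V W f \<in> extvar s t I e d"
proof -
  let ?G = "extend_units d (\<lambda>x. d x + e x) f"
  have f: "in_mat (d x + e x) (d x) (f x)" for x using M unfolding monovar_def by auto
  then have "in_mat (d x + e x) (d x + e x) (?G x)" for x
    unfolding extend_units_def in_mat_def idm_def by auto
  then have GH: "inverse_pair (\<lambda>x. d x + e x) ?G (\<lambda>x. minv (d x + e x) (?G x))"
    using det by (rule inverse_pair_minv)
  have "mmult (?G x) (d x + e x) (idm (d x)) = f x" for x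
    using f unfolding mmult_idm_right_eq extend_units_def in_mat_def by (intro ext) auto
  from monovar_decompose(1)[OF M I GH this] show ?thesis unfolding ext_of_mono_def Let_def .
qed

lemma ext_of_mono_blockrep:
  fixes I :: "(('v \<times> 'a list) \<Rightarrow> 'k::field) set"
  assumes "(U, V, Z) \<in> extvar s t I e d"
  shows "ext_of_mono s t d e V (blockrep s t d V Z U) (\<lambda>x. idm (d x)) = (U, V, Z)"
proof -
  have fam: "is_mat_family s t d d V" "is_mat_family s t d e Z" "is_mat_family s t e e U"
    using assms unfolding extvar_def rep_def Zset_def by auto
  then show ?thesis
    using is_mat_family_blockrep[OF fam]
    by (simp add: ext_of_mono_def extend_units_idm minv_idm conj_rep_idm lower_block_blockrep
        upper_block_blockrep)
qed

lemma extvar_eq_image_ext_of_mono: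
  assumes I: "I \<subseteq> pathalg s t"
  shows "coords3 ` extvar s t I e d =
    (\<lambda>z. coords3 (ext_of_mono s t d e (entries1 z) (entries2 z) (entries3 z))) `
      {z \<in> coords3 ` monovar s t I d (\<lambda>x. d x + e x).
        \<forall>x. det (sq_mat (d x + e x) (extend_units d (\<lambda>x. d x + e x) (entries3 z) x)) \<noteq> 0}"
    (is "_ = ?Psi ` ?Om")
proof
  show "coords3 ` extvar s t I e d \<subseteq> ?Psi ` ?Om"
  proof
    fix w assume "w \<in> coords3 ` extvar s t I e d"
    then obtain U V Z where E: "(U, V, Z) \<in> extvar s t I e d" and w: "w = coords3 (U, V, Z)"
      by auto
    \<comment> \<open>an extension is recovered from the inclusion of its subrepresentation\<close>
    have "coords3 (V, blockrep s t d V Z U, \<lambda>x. idm (d x)) \<in> ?Om \<and>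
        ?Psi (coords3 (V, blockrep s t d V Z U, \<lambda>x. idm (d x))) = w"
      using imageI[OF blockrep_in_monovar[OF E], of coords3] ext_of_mono_blockrep[OF E]
      unfolding w by (simp add: extend_units_idm sq_mat_idm)
    then show "w \<in> ?Psi ` ?Om" by (elim conjE) (rule image_eqI[OF sym])
  qed
  show "?Psi ` ?Om \<subseteq> coords3 ` extvar s t I e d"
  proof
    fix w assume "w \<in> ?Psi ` ?Om"
    then obtain z where z: "z \<in> ?Om" and w: "w = ?Psi z" by (rule imageE)
    then obtain V W f where M: "(V, W, f) \<in> monovar s t I d (\<lambda>x. d x + e x)"
      and zc: "z = coords3 (V, W, f)"
      by auto
    have "ext_of_mono s t d e V W f \<in> extvar s t I e d"
      using ext_of_mono_in_extvar[OF M I] z unfolding zc by simp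
    then show "w \<in> coords3 ` extvar s t I e d" unfolding w zc by simp
  qed
qed

lemma zariski_irreducible_extvar:
  fixes s t :: "'a \<Rightarrow> 'v::finite" and I :: "(('v \<times> 'a list) \<Rightarrow> 'k::field) set"
  assumes adm: "admissible_ideal s t I"
    and irr: "zariski_irreducible (coords3 ` monovar s t I d (\<lambda>x. d x + e x))"
  shows "zariski_irreducible (coords3 ` extvar s t I e d)"
proof -
  let ?D = "\<lambda>x. d x + e x"
  let ?det = "\<lambda>z x. det (sq_mat (?D x) (extend_units d ?D (entries3 z) x))"
  let ?Om = "{z \<in> coords3 ` monovar s t I d ?D. \<forall>x. ?det z x \<noteq> 0}"
  note image = extvar_eq_image_ext_of_mono[OF admissible_ideal_pathalg[OF adm]]
  have "zariski_irreducible {z \<in> coords3 ` monovar s t I d ?D. (\<Prod>x\<in>UNIV. ?det z x) \<noteq> 0}"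
  proof (rule zariski_irreducible_nonzero_locus[OF irr])
    show "(\<lambda>z. \<Prod>x\<in>UNIV. ?det z x) \<in> polyfun"
      unfolding extend_units_def
      by (intro polyfun_prod polyfun_det_sq_mat polyfun_if polyfun_entries pf_const finite)
    have "coords3 ((\<lambda>a i j. 0), (\<lambda>a i j. 0), (\<lambda>a i j. 0)) \<in> coords3 ` extvar s t I e d"
      using zero_in_extvar[OF adm] by (rule imageI)
    then have "?Om \<noteq> {}" unfolding image by blast
    then show "\<exists>z\<in>coords3 ` monovar s t I d ?D. (\<Prod>x\<in>UNIV. ?det z x) \<noteq> 0" by auto
  qed
  then have "zariski_irreducible ?Om" by simp
  moreover have "regular_map_on ?Om
      (\<lambda>z. coords3 (ext_of_mono s t d e (entries1 z) (entries2 z) (entries3 z)))"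
    by (intro regular_map_on_ext_of_mono polyfun_entries) auto
  ultimately show ?thesis unfolding image by (rule zariski_irreducible_image)
qed

definition mono_of_ext :: "('a \<Rightarrow> 'v) \<Rightarrow> ('a \<Rightarrow> 'v) \<Rightarrow> ('v \<Rightarrow> nat) \<Rightarrow> ('v \<Rightarrow> nat)
    \<Rightarrow> ('v \<Rightarrow> nat \<Rightarrow> nat \<Rightarrow> 'k::field) \<Rightarrow> ('a \<Rightarrow> nat \<Rightarrow> nat \<Rightarrow> 'k) \<Rightarrow> ('a \<Rightarrow> nat \<Rightarrow> nat \<Rightarrow> 'k)
    \<Rightarrow> ('a \<Rightarrow> nat \<Rightarrow> nat \<Rightarrow> 'k) \<Rightarrow> ('a \<Rightarrow> nat \<Rightarrow> nat \<Rightarrow> 'k) \<times> ('a \<Rightarrow> nat \<Rightarrow> nat \<Rightarrow> 'k) \<times> ('v \<Rightarrow> nat \<Rightarrow> nat \<Rightarrow> 'k)"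
  where "mono_of_ext s t d e G U V Z =
    (V, conj_rep s t (\<lambda>x. d x + e x) G (blockrep s t d V Z U) (\<lambda>x. minv (d x + e x) (G x)),
     \<lambda>x. mmult (G x) (d x + e x) (idm (d x)))"

lemma mono_of_ext_in_monovar:
  assumes "(U, V, Z) \<in> extvar s t I e d" "I \<subseteq> pathalg s t" "invertible_family (\<lambda>x. d x + e x) G"
  shows "mono_of_ext s t d e G U V Z \<in> monovar s t I d (\<lambda>x. d x + e x)"
proof -
  have "inverse_pair (\<lambda>x. d x + e x) G (\<lambda>x. minv (d x + e x) (G x))"
    using assms(3) unfolding invertible_family_def by (intro inverse_pair_minv) auto
  from monovar_conj_rep[OF blockrep_in_monovar[OF assms(1)] assms(2) this]
  show ?thesis unfolding mono_of_ext_def .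
qed

lemma monovar_imp_mono_of_ext:
  assumes M: "(V, W, f) \<in> monovar s t I d (\<lambda>x. d x + e x)" and I: "I \<subseteq> pathalg s t"
  shows "\<exists>G U Z. invertible_family (\<lambda>x. d x + e x) G \<and> (U, V, Z) \<in> extvar s t I e d \<and>
    (V, W, f) = mono_of_ext s t d e G U V Z"
proof -
  have f: "in_mat (d x + e x) (d x) (f x)" "injective_mat (d x + e x) (d x) (f x)" for x
    using M unfolding monovar_def by auto
  then have "\<forall>x. \<exists>g. in_mat (d x + e x) (d x + e x) g \<and> det (sq_mat (d x + e x) g) \<noteq> 0 \<and>
      (\<forall>i j. j < d x \<longrightarrow> g i j = f x i j)"
    by (intro allI exists_invertible_extension) auto
  from choice[OF this] obtain G where G: "\<And>x. in_mat (d x + e x) (d x + e x) (G x)"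
    "\<And>x. det (sq_mat (d x + e x) (G x)) \<noteq> 0" "\<And>x i j. j < d x \<Longrightarrow> G x i j = f x i j"
    by blast
  have inv: "invertible_family (\<lambda>x. d x + e x) G" unfolding invertible_family_def using G by blast
  have GH: "inverse_pair (\<lambda>x. d x + e x) G (\<lambda>x. minv (d x + e x) (G x))"
    using G(1,2) by (rule inverse_pair_minv)
  have Gf: "mmult (G x) (d x + e x) (idm (d x)) = f x" for x
    using f(1) G(3) unfolding mmult_idm_right_eq in_mat_def by (intro ext) auto
  note dec = monovar_decompose[OF M I GH Gf]
  have "f = (\<lambda>x. mmult (G x) (d x + e x) (idm (d x)))" using Gf by auto
  then show ?thesis using inv dec unfolding mono_of_ext_def by blast
qed

lemma regular_map_on_mono_of_ext:
  assumes G_poly: "\<And>x i j. (\<lambda>z. G z x i j) \<in> polyfun"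
    and G_inv: "\<And>z. z \<in> S \<Longrightarrow> invertible_family (\<lambda>x. d x + e x) (G z)"
    and "\<And>a i j. (\<lambda>z. U z a i j) \<in> polyfun" "\<And>a i j. (\<lambda>z. V z a i j) \<in> polyfun"
      "\<And>a i j. (\<lambda>z. Z z a i j) \<in> polyfun"
  shows "regular_map_on S (\<lambda>z. coords3 (mono_of_ext s t d e (G z) (U z) (V z) (Z z)))"
proof -
  have reg_minv: "regular_on S (\<lambda>z. minv (d x + e x) (G z x) i j)" for x i j
    using G_poly G_inv unfolding invertible_family_def by (intro regular_on_minv) auto
  have B_poly: "(\<lambda>z. blockrep s t d (V z) (Z z) (U z) a i j) \<in> polyfun" for a i j
    unfolding blockrep_def by (intro polyfun_if assms(3-5) pf_const)
  show ?thesis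
    unfolding mono_of_ext_def
    by (intro regular_map_on_coords3 regular_on_conj_rep regular_on_mmult reg_minv
        regular_on_polyfun G_poly B_poly assms(4) pf_const)
qed

lemma zariski_irreducible_segment:
  fixes G1 G2 :: "'v::finite \<Rightarrow> nat \<Rightarrow> nat \<Rightarrow> 'k::field"
  assumes inf: "infinite (UNIV :: 'k set)"
    and G: "invertible_family D G1" "invertible_family D G2"
  shows "zariski_irreducible
    {y :: unit \<Rightarrow> 'k. invertible_family D (\<lambda>x i j. G1 x i j + y () * (G2 x i j - G1 x i j))}"
proof -
  let ?G = "\<lambda>y x i j. G1 x i j + y () * (G2 x i j - G1 x i j)"
  define det_prod where "det_prod y = (\<Prod>x\<in>UNIV. det (sq_mat (D x) (?G y x)))" for y :: "unit \<Rightarrow> 'k"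
  have "in_mat (D x) (D x) (?G y x)" for y x
    using G unfolding invertible_family_def in_mat_def by auto
  then have "{y. invertible_family D (?G y)} = {y\<in>UNIV. det_prod y \<noteq> 0}"
    unfolding invertible_family_def det_prod_def by auto
  also have "zariski_irreducible \<dots>"
  proof (rule zariski_irreducible_nonzero_locus[OF zariski_irreducible_line[OF inf]])
    have "(\<lambda>y. ?G y x i j) \<in> polyfun" for x i j
      by (intro pf_add pf_mult pf_const pf_proj polyfun_minus)
    then show "det_prod \<in> polyfun"
      unfolding det_prod_def[abs_def] by (intro polyfun_prod polyfun_det_sq_mat finite)
    have "det_prod (\<lambda>_. 0) \<noteq> 0" using G(1) unfolding det_prod_def invertible_family_def by simp
    then show "\<exists>y\<in>UNIV. det_prod y \<noteq> 0" by blast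
  qed
  finally show ?thesis .
qed

text \<open>The irreducible subset is the image of the extension variety times the points \<tau> of the
  affine line for which G1 + \<tau> (G2 - G1) is invertible.\<close>

lemma monovar_pair_in_irreducible:
  fixes s t :: "'a \<Rightarrow> 'v::finite" and I :: "(('v \<times> 'a list) \<Rightarrow> 'k::field) set"
  assumes inf: "infinite (UNIV :: 'k set)" and I: "I \<subseteq> pathalg s t"
    and irr: "zariski_irreducible (coords3 ` extvar s t I e d)"
    and G1: "invertible_family (\<lambda>x. d x + e x) G1" and G2: "invertible_family (\<lambda>x. d x + e x) G2"
    and E1: "(U1, V1, Z1) \<in> extvar s t I e d" and E2: "(U2, V2, Z2) \<in> extvar s t I e d"
  shows "\<exists>T\<subseteq>coords3 ` monovar s t I d (\<lambda>x. d x + e x). zariski_irreducible T \<and>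
    coords3 (mono_of_ext s t d e G1 U1 V1 Z1) \<in> T \<and> coords3 (mono_of_ext s t d e G2 U2 V2 Z2) \<in> T"
proof -
  let ?D = "\<lambda>x. d x + e x"
  let ?G = "\<lambda>\<tau> x i j. G1 x i j + \<tau> * (G2 x i j - G1 x i j)"
  define K where "K = {y :: unit \<Rightarrow> 'k. invertible_family ?D (?G (y ()))}"
  define X where "X = {case_sum x y |x y. x \<in> coords3 ` extvar s t I e d \<and> y \<in> K}"
  define F where "F z = coords3 (mono_of_ext s t d e (?G (z (Inr ())))
    (entries1 (\<lambda>c. z (Inl c))) (entries2 (\<lambda>c. z (Inl c))) (entries3 (\<lambda>c. z (Inl c))))" for z
  have F_pt: "F (case_sum (coords3 (U, V, Z)) y) = coords3 (mono_of_ext s t d e (?G (y ())) U V Z)"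
    for U V Z y
    unfolding F_def by simp
  have point: "coords3 (mono_of_ext s t d e (?G \<tau>) U V Z) \<in> F ` X"
    if "(U, V, Z) \<in> extvar s t I e d" "invertible_family ?D (?G \<tau>)" for U V Z \<tau>
  proof (rule image_eqI)
    show "case_sum (coords3 (U, V, Z)) (\<lambda>_. \<tau>) \<in> X"
      using that unfolding X_def K_def
      by (intro CollectI exI[of _ "coords3 (U, V, Z)"] exI[of _ "\<lambda>_. \<tau>"]) auto
  qed (simp add: F_pt)
  have "zariski_irreducible X"
    unfolding X_def K_def using zariski_irreducible_segment[OF inf G1 G2]
    by (intro zariski_irreducible_product[OF irr]) simp
  moreover have "regular_map_on X F"
    unfolding F_def
  proof (rule regular_map_on_mono_of_ext)
    show "(\<lambda>z. ?G (z (Inr ())) x i j) \<in> polyfun" for x i j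
      by (intro pf_add pf_mult pf_const pf_proj polyfun_minus)
    show "invertible_family ?D (?G (z (Inr ())))" if "z \<in> X" for z
      using that unfolding X_def K_def by auto
  qed (simp_all add: entries1_def entries2_def entries3_def pf_proj)
  moreover have "F ` X \<subseteq> coords3 ` monovar s t I d ?D"
  proof
    fix w assume "w \<in> F ` X"
    then obtain U V Z y where "(U, V, Z) \<in> extvar s t I e d" "y \<in> K"
      and w: "w = F (case_sum (coords3 (U, V, Z)) y)"
      unfolding X_def by auto
    then show "w \<in> coords3 ` monovar s t I d ?D"
      unfolding w F_pt K_def by (auto intro: mono_of_ext_in_monovar[OF _ I])
  qed
  moreover have "coords3 (mono_of_ext s t d e G1 U1 V1 Z1) \<in> F ` X"
    using point[OF E1, of 0] G1 by simp
  moreover have "coords3 (mono_of_ext s t d e G2 U2 V2 Z2) \<in> F ` X"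
    using point[OF E2, of 1] G2 by simp
  ultimately show ?thesis by (intro exI[of _ "F ` X"]) (auto intro: zariski_irreducible_image)
qed

lemma zariski_irreducible_monovar:
  fixes s t :: "'a \<Rightarrow> 'v::finite" and I :: "(('v \<times> 'a list) \<Rightarrow> 'k::field) set"
  assumes inf: "infinite (UNIV :: 'k set)" and I: "I \<subseteq> pathalg s t"
    and irr: "zariski_irreducible (coords3 ` extvar s t I e d)"
  shows "zariski_irreducible (coords3 ` monovar s t I d (\<lambda>x. d x + e x))"
proof (rule zariski_irreducibleI_pairs)
  obtain U V Z where "(U, V, Z) \<in> extvar s t I e d"
    using zariski_irreducible_nonempty[OF irr] by auto
  then show "coords3 ` monovar s t I d (\<lambda>x. d x + e x) \<noteq> {}"
    using mono_of_ext_in_monovar[OF _ I invertible_family_idm] by blast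
next
  fix w1 w2
  assume "w1 \<in> coords3 ` monovar s t I d (\<lambda>x. d x + e x)"
    and "w2 \<in> coords3 ` monovar s t I d (\<lambda>x. d x + e x)"
  then obtain V1 W1 f1 V2 W2 f2 where
    M: "(V1, W1, f1) \<in> monovar s t I d (\<lambda>x. d x + e x)"
      "(V2, W2, f2) \<in> monovar s t I d (\<lambda>x. d x + e x)"
    and w: "w1 = coords3 (V1, W1, f1)" "w2 = coords3 (V2, W2, f2)"
    by auto
  obtain G1 U1 Z1 G2 U2 Z2 where
    "invertible_family (\<lambda>x. d x + e x) G1" "(U1, V1, Z1) \<in> extvar s t I e d"
    "(V1, W1, f1) = mono_of_ext s t d e G1 U1 V1 Z1"
    "invertible_family (\<lambda>x. d x + e x) G2" "(U2, V2, Z2) \<in> extvar s t I e d"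
    "(V2, W2, f2) = mono_of_ext s t d e G2 U2 V2 Z2"
    using monovar_imp_mono_of_ext[OF M(1) I] monovar_imp_mono_of_ext[OF M(2) I] by blast
  then show "\<exists>T\<subseteq>coords3 ` monovar s t I d (\<lambda>x. d x + e x). zariski_irreducible T \<and> w1 \<in> T \<and> w2 \<in> T"
    unfolding w using monovar_pair_in_irreducible[OF inf I irr] by simp
qed

theorem proposition3p2:
  fixes s t :: "'a::finite \<Rightarrow> 'v::finite"
    and I :: "(('v \<times> 'a list) \<Rightarrow> 'k::field) set"
  assumes "alg_closed TYPE('k)"
    and "admissible_ideal s t I"
  shows "ext_irreducible s t I \<longleftrightarrow> mono_irreducible s t I"
proof
  assume ext: "ext_irreducible s t I"
  show "mono_irreducible s t I"
    unfolding mono_irreducible_def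
  proof (intro allI impI)
    fix e d :: "'v \<Rightarrow> nat" assume le: "\<forall>x. e x \<le> d x"
    have d: "(\<lambda>x. e x + (d x - e x)) = d"
    proof
      fix x show "e x + (d x - e x) = d x" using le[rule_format, of x] by simp
    qed
    have "zariski_irreducible (coords3 ` extvar s t I (\<lambda>x. d x - e x) e)"
      using ext unfolding ext_irreducible_def by blast
    from zariski_irreducible_monovar[OF alg_closed_infinite[OF assms(1)]
        admissible_ideal_pathalg[OF assms(2)] this]
    show "zariski_irreducible (coords3 ` monovar s t I e d)" unfolding d .
  qed
next
  assume mono: "mono_irreducible s t I"
  show "ext_irreducible s t I"
    unfolding ext_irreducible_def
  proof (intro allI)
    fix e d :: "'v \<Rightarrow> nat"
    have "zariski_irreducible (coords3 ` monovar s t I d (\<lambda>x. d x + e x))"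
      using mono unfolding mono_irreducible_def by simp
    then show "zariski_irreducible (coords3 ` extvar s t I e d)"
      by (rule zariski_irreducible_extvar[OF assms(2)])
  qed
qed

end
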